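(* Let $Q_r=(-r,r)^d$. Then $\lim_{r\to\infty}\sup_{g\in\mathcal G_d(Q_r)}\|g\|^2_{L^2(Q_r)}=1$. Moreover, if $d/2<p<\min\{2,d\}$, then \[ \lim_{r\to\infty}\sup_{g\in\mathcal G_d(Q_r)}\int_{Q_r}\frac{g^2(x)}{|x|^p}dx=\rho(d,p)=\Big(\frac{2-p}{2}\Big)^{(2-p)/2}p^{p/2}\sigma(d,p). \]
   Context: For a domain $D$, $W^{1,2}(D)$ is the closure of $C_c^\infty(D)$ under $(\|g\|^2_{L^2(D)}+\|\nabla g\|^2_{L^2(D)})^{1/2}$ and $\mathcal G_d(D)=\{g\in W^{1,2}(D):\|g\|^2_{L^2(D)}+\frac12\|\nabla g\|^2_{L^2(D)}=1\}$; $\mathcal G_d=\mathcal G_d(\mathbb R^d)$. $\rho(d,p)=\sup_{g\in\mathcal G_d}\int_{\mathbb R^d}g^2(x)|x|^{-p}dx$. $\sigma(d,p)$ is the smallest constant $C$ such that $\int_{\mathbb R^d}f^2|x|^{-p}dx\le C\|f\|_2^{2-p}\|\nabla f\|_2^p$ for all $f\in W^{1,2}(\mathbb R^d)$. *)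

theory Defs
  imports "HOL-Analysis.Analysis"
begin

coinductive smooth_fun :: "('a::euclidean_space \<Rightarrow> real) \<Rightarrow> bool" where
  "(\<forall>x. f differentiable (at x)) \<Longrightarrow>
   (\<forall>b\<in>Basis. smooth_fun (\<lambda>x. frechet_derivative f (at x) b)) \<Longrightarrow> smooth_fun f"

definition grad :: "('a::euclidean_space \<Rightarrow> real) \<Rightarrow> 'a \<Rightarrow> 'a" where
  "grad f x = (\<Sum>b\<in>Basis. frechet_derivative f (at x) b *\<^sub>R b)"

definition test_fun :: "'a::euclidean_space set \<Rightarrow> ('a \<Rightarrow> real) \<Rightarrow> bool" where
  "test_fun D f \<longleftrightarrow> smooth_fun f \<and> compact (closure {x. f x \<noteq> 0})
      \<and> closure {x. f x \<noteq> 0} \<subseteq> D"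

definition L2sq :: "'a::euclidean_space set \<Rightarrow> ('a \<Rightarrow> real) \<Rightarrow> real" where
  "L2sq D g = set_lebesgue_integral lborel D (\<lambda>x. (g x)\<^sup>2)"

definition L2sq_vec :: "'a::euclidean_space set \<Rightarrow> ('a \<Rightarrow> 'a) \<Rightarrow> real" where
  "L2sq_vec D G = set_lebesgue_integral lborel D (\<lambda>x. (norm (G x))\<^sup>2)"

text \<open>W^{1,2}(D): closure of C_c^infinity(D) in the H^1 norm. An element is represented
  by a pair (g, G) with G the (weak) gradient of g, i.e. the H^1-limit of test functions
  and of their gradients.\<close>
definition W12 :: "'a::euclidean_space set \<Rightarrow> (('a \<Rightarrow> real) \<times> ('a \<Rightarrow> 'a)) set" where
  "W12 D = {(g, G). g \<in> borel_measurable lborel \<and> G \<in> borel_measurable lborel \<and>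
      set_integrable lborel D (\<lambda>x. (g x)\<^sup>2) \<and>
      set_integrable lborel D (\<lambda>x. (norm (G x))\<^sup>2) \<and>
      (\<exists>\<phi>. (\<forall>k. test_fun D (\<phi> k)) \<and>
         (\<lambda>k. set_nn_integral lborel D (\<lambda>x. ennreal ((\<phi> k x - g x)\<^sup>2))) \<longlonglongrightarrow> 0 \<and>
         (\<lambda>k. set_nn_integral lborel D (\<lambda>x. ennreal ((norm (grad (\<phi> k) x - G x))\<^sup>2)))
            \<longlonglongrightarrow> 0)}"

definition Gset :: "'a::euclidean_space set \<Rightarrow> (('a \<Rightarrow> real) \<times> ('a \<Rightarrow> 'a)) set" where
  "Gset D = {(g, G) \<in> W12 D. L2sq D g + 1/2 * L2sq_vec D G = 1}"

definition hardy_sup :: "'a::euclidean_space set \<Rightarrow> real \<Rightarrow> ennreal" where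
  "hardy_sup D p = Sup ((\<lambda>(g, G). set_nn_integral lborel D
       (\<lambda>x. ennreal ((g x)\<^sup>2 * norm x powr (- p)))) ` Gset D)"

text \<open>rho(d,p), with d = DIM('a).\<close>
definition rho :: "'a::euclidean_space itself \<Rightarrow> real \<Rightarrow> ennreal" where
  "rho _ p = hardy_sup (UNIV :: 'a set) p"

definition sigma :: "'a::euclidean_space itself \<Rightarrow> real \<Rightarrow> ennreal" where
  "sigma _ p = Inf {C. \<forall>(f, F) \<in> W12 (UNIV :: 'a set).
       set_nn_integral lborel UNIV (\<lambda>x. ennreal ((f x)\<^sup>2 * norm x powr (- p)))
       \<le> C * ennreal (sqrt (L2sq UNIV f) powr (2 - p) * sqrt (L2sq_vec UNIV F) powr p)}"

definition cube :: "real \<Rightarrow> 'a::euclidean_space set" where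
  "cube r = box (- (r *\<^sub>R One)) (r *\<^sub>R One)"

end

theory Submission
  imports Defs "HOL-Real_Asymp.Real_Asymp"
begin

(* Part 1.  On Q_r the L2 part of the constraint is at most 1; conversely the bump
   exp(-1/(1-|x|^2)) rescaled to radius r/2 and normalised to the constraint set puts the
   fraction A / (A + B/(2 (r/2)^2)) of its energy into the L2 norm, which tends to 1.

   Part 2.  Extension by zero makes hardy_sup(Q_r) increasing in r and bounded by rho.  For the
   reverse inequality every g of the constraint set on R^d is approximated by test functions,
   each supported in some cube; a weighted triangle inequality and truncation of the weight
   near the origin (followed by monotone convergence) bound the weighted integral of g by the
   supremum over cubes.

   The upper bound follows
   from the weighted AM-GM inequality on the constraint a + b/2 = 1; the lower bound from
   dilating any f in W^{1,2} optimally onto the constraint set. *)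

text \<open>The flat function t \<mapsto> exp(-1/t) / t^n (extended by 0 for t \<le> 0) and its derivative.
  The family is closed under differentiation, which makes everything built from it smooth.\<close>
definition flat :: "nat \<Rightarrow> real \<Rightarrow> real" where
  "flat n t = (if t > 0 then exp (-1/t) / t^n else 0)"

definition flat' :: "nat \<Rightarrow> real \<Rightarrow> real" where
  "flat' n t = flat (n+2) t - real n * flat (n+1) t"

lemma flat_tendsto_0: "((\<lambda>t. exp (-1/t) / t^m) \<longlongrightarrow> (0::real)) (at_right 0)"
proof -
  have "((\<lambda>x. x ^ m / exp x) \<longlongrightarrow> (0::real)) at_top" by (rule tendsto_power_div_exp_0)
  then have "((\<lambda>t. (inverse t) ^ m / exp (inverse t)) \<longlongrightarrow> (0::real)) (at_right 0)"
    using filterlim_compose filterlim_inverse_at_top_right by blast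
  then show ?thesis
    by (rule tendsto_cong[THEN iffD1, rotated])
       (auto simp: eventually_at_right_less exp_minus field_simps power_inverse
             intro!: eventually_mono[OF eventually_at_right_less])
qed

text \<open>The derivative of flat n is flat' n everywhere, including at 0 where all one-sided
  difference quotients vanish.\<close>
lemma flat_has_derivative: "(flat n has_real_derivative flat' n t) (at t)"
proof -
  consider "t > 0" | "t < 0" | "t = 0" by linarith
  then show ?thesis
  proof cases
    case 1
    have "((\<lambda>y. exp (-1/y) / y^n) has_real_derivative flat' n t) (at t)"
      using 1
      apply (auto intro!: derivative_eq_intros simp: flat'_def flat_def)
      apply (cases n)
       apply (auto simp: field_simps power2_eq_square)
      done
    then show ?thesis
      by (rule has_field_derivative_transform_within_open[of _ _ _ "{0<..}"])
         (use 1 in \<open>auto simp: flat_def\<close>)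
  next
    case 2
    have "((\<lambda>y. 0) has_real_derivative flat' n t) (at t)"
      using 2 by (auto intro!: derivative_eq_intros simp: flat'_def flat_def)
    then show ?thesis
      by (rule has_field_derivative_transform_within_open[of _ _ _ "{..<0}"])
         (use 2 in \<open>auto simp: flat_def\<close>)
  next
    case 3
    have "((\<lambda>y. (flat n y - flat n 0) / (y - 0)) \<longlongrightarrow> 0) (at 0)"
    proof (rule filterlim_split_at)
      show "((\<lambda>y. (flat n y - flat n 0) / (y - 0)) \<longlongrightarrow> 0) (at_left (0::real))"
        by (rule tendsto_cong[THEN iffD1, rotated, OF tendsto_const])
           (auto simp: flat_def eventually_at_filter)
      show "((\<lambda>y. (flat n y - flat n 0) / (y - 0)) \<longlongrightarrow> 0) (at_right (0::real))"
        by (rule tendsto_cong[THEN iffD1, rotated, OF flat_tendsto_0[of "Suc n"]])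
           (auto simp: flat_def intro!: eventually_mono[OF eventually_at_right_less])
    qed
    then show ?thesis using 3
      by (simp add: has_field_derivative_iff flat'_def flat_def)
  qed
qed

inductive_set flat_alg :: "('a::euclidean_space \<Rightarrow> real) set" where
  const: "(\<lambda>x. c) \<in> flat_alg"
| lin: "(\<lambda>x. x \<bullet> v) \<in> flat_alg"
| sq: "(\<lambda>x. x \<bullet> x) \<in> flat_alg"
| add: "f \<in> flat_alg \<Longrightarrow> g \<in> flat_alg \<Longrightarrow> (\<lambda>x. f x + g x) \<in> flat_alg"
| mult: "f \<in> flat_alg \<Longrightarrow> g \<in> flat_alg \<Longrightarrow> (\<lambda>x. f x * g x) \<in> flat_alg"
| comp: "f \<in> flat_alg \<Longrightarrow> (\<lambda>x. flat n (f x)) \<in> flat_alg"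

lemma flat'_in_flat_alg: "f \<in> flat_alg \<Longrightarrow> (\<lambda>x. flat' n (f x)) \<in> flat_alg"
proof -
  assume "f \<in> flat_alg"
  then have "(\<lambda>x. flat (n+2) (f x) + (\<lambda>x. - real n) x * flat (n+1) (f x)) \<in> flat_alg"
    by (intro flat_alg.intros)
  then show ?thesis by (simp add: flat'_def)
qed

lemma flat_alg_has_derivative:
  assumes "f \<in> flat_alg"
  shows "\<exists>D. (\<forall>x. (f has_derivative (\<lambda>v. D v x)) (at x)) \<and> (\<forall>v. (\<lambda>x. D v x) \<in> flat_alg)"
  using assms
proof induction
  case (const c)
  show ?case by (rule exI[of _ "\<lambda>v x. 0"]) (auto intro!: derivative_eq_intros flat_alg.intros)
next
  case (lin v)
  show ?case
    by (rule exI[of _ "\<lambda>w x. w \<bullet> v"]) (auto intro!: derivative_eq_intros flat_alg.intros)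
next
  case sq
  have "(\<lambda>x. 2 * (x \<bullet> w)) \<in> flat_alg" for w :: 'a
    using flat_alg.mult[OF flat_alg.const flat_alg.lin, of 2 w] by simp
  then show ?case
    by (intro exI[of _ "\<lambda>w x. 2 * (x \<bullet> w)"])
       (auto intro!: derivative_eq_intros simp: inner_commute)
next
  case (add f g)
  then obtain D1 D2 where "\<forall>x. (f has_derivative (\<lambda>v. D1 v x)) (at x)" "\<forall>v. (\<lambda>x. D1 v x) \<in> flat_alg"
    and "\<forall>x. (g has_derivative (\<lambda>v. D2 v x)) (at x)" "\<forall>v. (\<lambda>x. D2 v x) \<in> flat_alg" by blast
  then show ?case
    by (intro exI[of _ "\<lambda>v x. D1 v x + D2 v x"]) (auto intro!: derivative_eq_intros flat_alg.intros)
next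
  case (mult f g)
  then obtain D1 D2 where "\<forall>x. (f has_derivative (\<lambda>v. D1 v x)) (at x)" "\<forall>v. (\<lambda>x. D1 v x) \<in> flat_alg"
    and "\<forall>x. (g has_derivative (\<lambda>v. D2 v x)) (at x)" "\<forall>v. (\<lambda>x. D2 v x) \<in> flat_alg" by blast
  then show ?case
    by (intro exI[of _ "\<lambda>v x. f x * D2 v x + D1 v x * g x"])
       (use mult in \<open>auto intro!: derivative_eq_intros flat_alg.intros\<close>)
next
  case (comp f n)
  then obtain D where d: "\<forall>x. (f has_derivative (\<lambda>v. D v x)) (at x)" "\<forall>v. (\<lambda>x. D v x) \<in> flat_alg"
    by blast
  have "((\<lambda>x. flat n (f x)) has_derivative (\<lambda>v. flat' n (f x) * D v x)) (at x)" for x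
  proof -
    have "(flat n \<circ> f has_derivative (\<lambda>v. flat' n (f x) * v) \<circ> (\<lambda>v. D v x)) (at x)"
      by (rule diff_chain_at) (use d flat_has_derivative[unfolded has_field_derivative_def] in auto)
    then show ?thesis by (simp add: o_def)
  qed
  then show ?case
    by (intro exI[of _ "\<lambda>v x. flat' n (f x) * D v x"])
       (use d comp flat'_in_flat_alg in \<open>auto intro!: flat_alg.intros\<close>)
qed

text \<open>Coinduction on smooth_fun: derivatives stay inside the algebra.\<close>
lemma flat_alg_smooth: "f \<in> flat_alg \<Longrightarrow> smooth_fun f"
proof (coinduction arbitrary: f rule: smooth_fun.coinduct)
  case (smooth_fun f)
  then obtain D where d: "\<forall>x. (f has_derivative (\<lambda>v. D v x)) (at x)" "\<forall>v. (\<lambda>x. D v x) \<in> flat_alg"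
    using flat_alg_has_derivative by blast
  have "frechet_derivative f (at x) = (\<lambda>v. D v x)" for x
    using d(1) frechet_derivative_at by metis
  then show ?case using d by (auto simp: differentiable_def)
qed

lemma smooth_fun_differentiable: "smooth_fun f \<Longrightarrow> f differentiable (at x)"
  by (erule smooth_fun.cases) auto

lemma smooth_fun_partial:
  "smooth_fun f \<Longrightarrow> b \<in> Basis \<Longrightarrow> smooth_fun (\<lambda>x. frechet_derivative f (at x) b)"
  by (erule smooth_fun.cases) auto

lemma smooth_fun_continuous: "smooth_fun f \<Longrightarrow> continuous_on UNIV f"
  by (metis continuous_at_imp_continuous_on differentiable_imp_continuous_within
        smooth_fun_differentiable)

lemma smooth_fun_grad_continuous: "smooth_fun f \<Longrightarrow> continuous_on UNIV (grad f)"
  unfolding grad_def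
  by (intro continuous_intros continuous_on_scaleR smooth_fun_continuous smooth_fun_partial) auto

lemma smooth_fun_measurable: "smooth_fun f \<Longrightarrow> f \<in> borel_measurable lborel"
  unfolding measurable_lborel2 by (rule borel_measurable_continuous_onI[OF smooth_fun_continuous])

lemma smooth_fun_grad_measurable: "smooth_fun f \<Longrightarrow> grad f \<in> borel_measurable lborel"
  unfolding measurable_lborel2
  by (rule borel_measurable_continuous_onI[OF smooth_fun_grad_continuous])

lemma has_derivative_rescale:
  assumes "f differentiable (at (c *\<^sub>R x))"
  shows "((\<lambda>x. t * f (c *\<^sub>R x)) has_derivative
           (\<lambda>v. (t * c) * frechet_derivative f (at (c *\<^sub>R x)) v)) (at x)"
proof -
  have lin: "linear (frechet_derivative f (at (c *\<^sub>R x)))"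
    using assms frechet_derivative_works has_derivative_linear by blast
  have "(f \<circ> (\<lambda>x. c *\<^sub>R x) has_derivative frechet_derivative f (at (c *\<^sub>R x)) \<circ> (\<lambda>v. c *\<^sub>R v)) (at x)"
    by (rule diff_chain_at)
       (auto intro!: derivative_eq_intros simp: assms frechet_derivative_works[symmetric])
  then have "((\<lambda>x. f (c *\<^sub>R x)) has_derivative
               (\<lambda>v. c * frechet_derivative f (at (c *\<^sub>R x)) v)) (at x)"
    using linear.scaleR[OF lin] by (simp add: o_def)
  from has_derivative_mult_right[OF this, of t] show ?thesis by (simp add: algebra_simps)
qed

lemma smooth_fun_rescale: "smooth_fun f \<Longrightarrow> smooth_fun (\<lambda>x. t * f (c *\<^sub>R x))"
proof (coinduction arbitrary: f t c rule: smooth_fun.coinduct)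
  case (smooth_fun f t c)
  have diff: "f differentiable (at y)" for y using smooth_fun by (rule smooth_fun_differentiable)
  note hd = has_derivative_rescale[OF diff, where c=c and t=t]
  have fd: "frechet_derivative (\<lambda>x. t * f (c *\<^sub>R x)) (at x) b
      = (t * c) * frechet_derivative f (at (c *\<^sub>R x)) b" for x b
    using frechet_derivative_at[OF hd] by metis
  show ?case
  proof (intro exI[of _ "\<lambda>x. t * f (c *\<^sub>R x)"] conjI refl allI ballI)
    show "(\<lambda>x. t * f (c *\<^sub>R x)) differentiable at x" for x
      using hd by (auto simp: differentiable_def)
    fix b :: 'a assume "b \<in> Basis"
    then show "(\<exists>f' t' c'. (\<lambda>x. frechet_derivative (\<lambda>x. t * f (c *\<^sub>R x)) (at x) b)
        = (\<lambda>x. t' * f' (c' *\<^sub>R x)) \<and> smooth_fun f')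
      \<or> smooth_fun (\<lambda>x. frechet_derivative (\<lambda>x. t * f (c *\<^sub>R x)) (at x) b)"
      using smooth_fun_partial[OF smooth_fun]
      by (intro disjI1 exI[of _ "\<lambda>y. frechet_derivative f (at y) b"] exI[of _ "t * c"] exI[of _ c])
         (simp add: fd)
  qed
qed

lemma grad_rescale:
  assumes "\<And>y. f differentiable (at y)"
  shows "grad (\<lambda>x. t * f (c *\<^sub>R x)) x = (t * c) *\<^sub>R grad f (c *\<^sub>R x)"
proof -
  have "frechet_derivative (\<lambda>x. t * f (c *\<^sub>R x)) (at x) b
      = (t * c) * frechet_derivative f (at (c *\<^sub>R x)) b" for b
    using frechet_derivative_at[OF has_derivative_rescale[OF assms, where c=c and x=x and t=t]]
    by metis
  then show ?thesis unfolding grad_def by (simp add: scaleR_sum_right)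
qed

lemma zero_outside_support: "x \<notin> closure {x. f x \<noteq> 0} \<Longrightarrow> f x = 0"
  using closure_subset[of "{x. f x \<noteq> 0}"] by auto

lemma grad_zero_outside_support:
  assumes "x \<notin> closure {x. f x \<noteq> 0}"
  shows "grad f x = 0"
proof -
  have "((\<lambda>x. 0::real) has_derivative (\<lambda>v. 0)) (at x)" by simp
  then have "(f has_derivative (\<lambda>v. 0)) (at x)"
    by (rule has_derivative_transform_within_open[of _ _ _ _ "- closure {x. f x \<noteq> 0}"])
       (use assms zero_outside_support in auto)
  note fd = frechet_derivative_at[OF this, symmetric]
  show ?thesis unfolding grad_def fd by simp
qed

lemma test_fun_vanishes_outside: "test_fun D f \<Longrightarrow> x \<notin> D \<Longrightarrow> f x = 0 \<and> grad f x = 0"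
  using zero_outside_support grad_zero_outside_support by (metis subsetD test_fun_def)

lemma test_fun_mono: "test_fun D f \<Longrightarrow> D \<subseteq> E \<Longrightarrow> test_fun E f"
  by (auto simp: test_fun_def)

lemma test_fun_rescale:
  assumes "test_fun D f" "c \<noteq> 0"
  shows "test_fun ((\<lambda>x. x /\<^sub>R c) ` D) (\<lambda>x. t * f (c *\<^sub>R x))"
proof -
  let ?K = "closure {x. f x \<noteq> 0}"
  have K: "compact ?K" "?K \<subseteq> D" using assms unfolding test_fun_def by auto
  have cK: "compact ((\<lambda>x. x /\<^sub>R c) ` ?K)"
    by (intro compact_continuous_image K continuous_intros)
  have sub: "{x. t * f (c *\<^sub>R x) \<noteq> 0} \<subseteq> (\<lambda>x. x /\<^sub>R c) ` ?K"
  proof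
    fix x assume "x \<in> {x. t * f (c *\<^sub>R x) \<noteq> 0}"
    then have "c *\<^sub>R x \<in> ?K" by (intro closure_subset[THEN subsetD]) simp
    then show "x \<in> (\<lambda>x. x /\<^sub>R c) ` ?K" by (rule image_eqI[rotated]) (use assms(2) in simp)
  qed
  have cl: "closure {x. t * f (c *\<^sub>R x) \<noteq> 0} \<subseteq> (\<lambda>x. x /\<^sub>R c) ` ?K"
    by (rule closure_minimal[OF sub compact_imp_closed[OF cK]])
  show ?thesis unfolding test_fun_def
  proof (intro conjI)
    show "smooth_fun (\<lambda>x. t * f (c *\<^sub>R x))"
      using smooth_fun_rescale[of f t c] assms by (simp add: test_fun_def)
    show "compact (closure {x. t * f (c *\<^sub>R x) \<noteq> 0})"
      using bounded_subset[OF compact_imp_bounded[OF cK] sub] by (simp only: compact_closure)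
    show "closure {x. t * f (c *\<^sub>R x) \<noteq> 0} \<subseteq> (\<lambda>x. x /\<^sub>R c) ` D"
      using cl image_mono[OF K(2)] by (rule subset_trans)
  qed
qed

lemma set_integral_as_nn_integral:
  assumes "set_integrable lborel D h" "\<And>x. h x \<ge> 0"
  shows "ennreal (set_lebesgue_integral lborel D h) = (\<integral>\<^sup>+x. ennreal (h x) * indicator D x \<partial>lborel)"
    and "set_lebesgue_integral lborel D h \<ge> 0"
proof -
  have i: "integrable lborel (\<lambda>x. indicator D x *\<^sub>R h x)"
    using assms(1) by (simp add: set_integrable_def)
  have "(\<integral>\<^sup>+x. ennreal (indicator D x *\<^sub>R h x) \<partial>lborel)
      = ennreal (integral\<^sup>L lborel (\<lambda>x. indicator D x *\<^sub>R h x))"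
    by (rule nn_integral_eq_integral[OF i]) (use assms(2) in \<open>auto simp: indicator_def\<close>)
  moreover have "(\<integral>\<^sup>+x. ennreal (indicator D x *\<^sub>R h x) \<partial>lborel)
      = (\<integral>\<^sup>+x. ennreal (h x) * indicator D x \<partial>lborel)"
    by (rule nn_integral_cong) (simp split: split_indicator)
  ultimately show "ennreal (set_lebesgue_integral lborel D h)
      = (\<integral>\<^sup>+x. ennreal (h x) * indicator D x \<partial>lborel)"
    by (simp add: set_lebesgue_integral_def)
  show "set_lebesgue_integral lborel D h \<ge> 0"
    unfolding set_lebesgue_integral_def using assms(2)
    by (intro integral_nonneg_AE) (auto simp: indicator_def)
qed

lemma W12_norms:
  assumes "(g, G) \<in> W12 D"
  shows "ennreal (L2sq D g) = (\<integral>\<^sup>+x. ennreal ((g x)\<^sup>2) * indicator D x \<partial>lborel)" "L2sq D g \<ge> 0"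
    and "ennreal (L2sq_vec D G) = (\<integral>\<^sup>+x. ennreal ((norm (G x))\<^sup>2) * indicator D x \<partial>lborel)"
      "L2sq_vec D G \<ge> 0"
  using assms set_integral_as_nn_integral[of D "\<lambda>x. (g x)\<^sup>2"]
    set_integral_as_nn_integral[of D "\<lambda>x. (norm (G x))\<^sup>2"]
  by (auto simp: W12_def L2sq_def L2sq_vec_def)

text \<open>A test function (with its classical gradient) lies in W^{1,2}(D), approximated by itself.\<close>
lemma test_fun_in_W12:
  assumes t: "test_fun D f"
  shows "(f, grad f) \<in> W12 D"
proof -
  let ?K = "closure {x. f x \<noteq> 0}"
  have sm: "smooth_fun f" and K: "compact ?K" "?K \<subseteq> D" using t by (auto simp: test_fun_def)
  have i1: "integrable lborel (\<lambda>x. indicator ?K x *\<^sub>R (f x)\<^sup>2)"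
    by (rule borel_integrable_compact[OF K(1)])
       (intro continuous_intros continuous_on_subset[OF smooth_fun_continuous[OF sm]]; simp)
  have i2: "integrable lborel (\<lambda>x. indicator ?K x *\<^sub>R (norm (grad f x))\<^sup>2)"
    by (rule borel_integrable_compact[OF K(1)])
       (intro continuous_intros continuous_on_subset[OF smooth_fun_grad_continuous[OF sm]]; simp)
  have e1: "indicator D x *\<^sub>R (f x)\<^sup>2 = indicator ?K x *\<^sub>R (f x)\<^sup>2"
    and e2: "indicator D x *\<^sub>R (norm (grad f x))\<^sup>2 = indicator ?K x *\<^sub>R (norm (grad f x))\<^sup>2"
    for x
    using K(2) zero_outside_support[of x f] grad_zero_outside_support[of x f]
    by (auto simp: indicator_def)
  have "set_integrable lborel D (\<lambda>x. (f x)\<^sup>2)"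
    and "set_integrable lborel D (\<lambda>x. (norm (grad f x))\<^sup>2)"
    unfolding set_integrable_def e1 e2 by (fact i1 i2)+
  then show ?thesis
    unfolding W12_def
    using t smooth_fun_measurable[OF sm] smooth_fun_grad_measurable[OF sm]
    by (intro CollectI case_prodI conjI exI[of _ "\<lambda>k. f"]) simp_all
qed

lemma test_fun_norms_UNIV:
  assumes "test_fun D f"
  shows "L2sq D f = L2sq UNIV f" "L2sq_vec D (grad f) = L2sq_vec UNIV (grad f)"
proof -
  have "(\<lambda>x. indicator D x *\<^sub>R (f x)\<^sup>2) = (\<lambda>x. (f x)\<^sup>2)"
    and "(\<lambda>x. indicator D x *\<^sub>R (norm (grad f x))\<^sup>2) = (\<lambda>x. (norm (grad f x))\<^sup>2)"
    using test_fun_vanishes_outside[OF assms] by (auto simp: indicator_def fun_eq_iff)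
  then show "L2sq D f = L2sq UNIV f" "L2sq_vec D (grad f) = L2sq_vec UNIV (grad f)"
    by (simp_all add: L2sq_def L2sq_vec_def set_lebesgue_integral_def)
qed

lemma Gset_L2sq_le_1: "(g, G) \<in> Gset D \<Longrightarrow> L2sq D g \<le> 1"
  using W12_norms(4)[of g G D] by (auto simp: Gset_def)

definition hardy_integral :: "real \<Rightarrow> 'a::euclidean_space set \<Rightarrow> ('a \<Rightarrow> real) \<Rightarrow> ennreal" where
  "hardy_integral p D g = (\<integral>\<^sup>+x. ennreal ((g x)\<^sup>2 * norm x powr (- p)) * indicator D x \<partial>lborel)"

lemma hardy_sup_eq: "hardy_sup D p = Sup ((\<lambda>(g, G). hardy_integral p D g) ` Gset D)"
  by (simp add: hardy_sup_def hardy_integral_def)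

lemma hardy_integral_le_hardy_sup: "(g, G) \<in> Gset D \<Longrightarrow> hardy_integral p D g \<le> hardy_sup D p"
  unfolding hardy_sup_eq by (rule SUP_upper2) auto

lemma hardy_integral_eq_0:
  assumes W: "(g, G) \<in> W12 UNIV" and z: "L2sq UNIV g = 0"
  shows "hardy_integral p UNIV g = 0"
proof -
  have [measurable]: "g \<in> borel_measurable borel" using W by (auto simp: W12_def)
  have "(\<integral>\<^sup>+x. ennreal ((g x)\<^sup>2) \<partial>lborel) = 0" using W12_norms(1)[OF W] z by simp
  then have "AE x in lborel. ennreal ((g x)\<^sup>2) = 0"
    by (subst (asm) nn_integral_0_iff_AE) auto
  then have "AE x in lborel. ennreal ((g x)\<^sup>2 * norm x powr - p) * indicator UNIV x = 0"
    by (rule AE_mp) (auto intro!: AE_I2)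
  then show ?thesis unfolding hardy_integral_def by (simp add: nn_integral_0_iff_AE)
qed

lemma nn_integral_dilate:
  fixes h :: "'a::euclidean_space \<Rightarrow> ennreal"
  assumes [measurable]: "h \<in> borel_measurable borel" and c: "c > 0"
  shows "(\<integral>\<^sup>+x. h (c *\<^sub>R x) \<partial>lborel) = ennreal (1 / c^DIM('a)) * (\<integral>\<^sup>+x. h x \<partial>lborel)"
proof -
  have "(\<integral>\<^sup>+x. h x \<partial>lborel) = ennreal (c^DIM('a)) * (\<integral>\<^sup>+x. h (c *\<^sub>R x) \<partial>lborel)"
    using c by (subst lborel_affine[of c 0])
      (simp_all add: nn_integral_density nn_integral_distr nn_integral_cmult)
  then show ?thesis
    using c by (simp add: ennreal_mult[symmetric] mult.assoc[symmetric] divide_simps)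
qed

lemma nn_integral_dilate_cmult:
  fixes h :: "'a::euclidean_space \<Rightarrow> real"
  assumes [measurable]: "h \<in> borel_measurable borel" and c: "c > 0"
    and nonneg: "k \<ge> 0" "\<And>x. h x \<ge> 0"
  shows "(\<integral>\<^sup>+x. ennreal (k * h (c *\<^sub>R x)) \<partial>lborel)
       = ennreal (k / c^DIM('a)) * (\<integral>\<^sup>+x. ennreal (h x) \<partial>lborel)"
proof -
  have "(\<integral>\<^sup>+x. ennreal (k * h (c *\<^sub>R x)) \<partial>lborel) = ennreal k * (\<integral>\<^sup>+x. ennreal (h (c *\<^sub>R x)) \<partial>lborel)"
    using nonneg by (simp add: ennreal_mult nn_integral_cmult)
  also have "\<dots> = ennreal (k / c^DIM('a)) * (\<integral>\<^sup>+x. ennreal (h x) \<partial>lborel)"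
    using nn_integral_dilate[of "\<lambda>x. ennreal (h x)" c] c nonneg
    by (simp add: ennreal_mult[symmetric] mult.assoc[symmetric])
  finally show ?thesis .
qed

lemma integral_dilate:
  fixes h :: "'a::euclidean_space \<Rightarrow> real"
  assumes i: "integrable lborel h" and nonneg: "\<And>x. h x \<ge> 0" and c: "c > 0"
  shows "integrable lborel (\<lambda>x. h (c *\<^sub>R x))"
    and "integral\<^sup>L lborel (\<lambda>x. h (c *\<^sub>R x)) = 1 / c^DIM('a) * integral\<^sup>L lborel h"
proof -
  have [measurable]: "h \<in> borel_measurable borel" using borel_measurable_integrable[OF i] by simp
  have I: "integral\<^sup>L lborel h \<ge> 0" using nonneg by (simp add: integral_nonneg)
  have e: "(\<integral>\<^sup>+x. ennreal (h (c *\<^sub>R x)) \<partial>lborel) = ennreal (1 / c^DIM('a) * integral\<^sup>L lborel h)"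
  proof -
    have "(\<integral>\<^sup>+x. ennreal (h (c *\<^sub>R x)) \<partial>lborel) = ennreal (1 / c^DIM('a)) * ennreal (integral\<^sup>L lborel h)"
      using nn_integral_dilate[of "\<lambda>x. ennreal (h x)" c] c nn_integral_eq_integral[OF i] nonneg
      by simp
    then show ?thesis using I c by (subst ennreal_mult) auto
  qed
  show i': "integrable lborel (\<lambda>x. h (c *\<^sub>R x))"
    by (rule integrableI_nonneg) (use nonneg e in auto)
  have "ennreal (integral\<^sup>L lborel (\<lambda>x. h (c *\<^sub>R x))) = ennreal (1 / c^DIM('a) * integral\<^sup>L lborel h)"
    using nn_integral_eq_integral[OF i'] nonneg e by simp
  then show "integral\<^sup>L lborel (\<lambda>x. h (c *\<^sub>R x)) = 1 / c^DIM('a) * integral\<^sup>L lborel h"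
    using I c nonneg by (subst (asm) ennreal_inj) (auto simp: integral_nonneg)
qed

lemma W12_UNIV_iff:
  "(f, F) \<in> W12 UNIV \<longleftrightarrow> f \<in> borel_measurable lborel \<and> F \<in> borel_measurable lborel \<and>
      integrable lborel (\<lambda>x. (f x)\<^sup>2) \<and> integrable lborel (\<lambda>x. (norm (F x))\<^sup>2) \<and>
      (\<exists>\<phi>. (\<forall>k. test_fun UNIV (\<phi> k)) \<and>
         (\<lambda>k. \<integral>\<^sup>+x. ennreal ((\<phi> k x - f x)\<^sup>2) \<partial>lborel) \<longlonglongrightarrow> 0 \<and>
         (\<lambda>k. \<integral>\<^sup>+x. ennreal ((norm (grad (\<phi> k) x - F x))\<^sup>2) \<partial>lborel) \<longlonglongrightarrow> 0)"
  by (simp add: W12_def set_integrable_def)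

lemma powr_scale_norm:
  fixes x :: "'a::real_normed_vector" assumes c: "c > 0"
  shows "norm x powr - p = c powr p * norm (c *\<^sub>R x) powr - p"
proof -
  have "norm (c *\<^sub>R x) powr - p = c powr - p * norm x powr - p" using c by (simp add: powr_mult)
  moreover have "c powr p * c powr - p = 1" using c by (simp add: powr_add[symmetric])
  ultimately show ?thesis by (simp add: mult.assoc[symmetric])
qed

lemma W12_dilate_norms:
  fixes f :: "'a::euclidean_space \<Rightarrow> real" and F :: "'a \<Rightarrow> 'a"
  assumes W: "(f, F) \<in> W12 UNIV" and c: "c > 0"
  shows "L2sq UNIV (\<lambda>x. t * f (c *\<^sub>R x)) = t\<^sup>2 / c^DIM('a) * L2sq UNIV f"
    and "L2sq_vec UNIV (\<lambda>x. (t * c) *\<^sub>R F (c *\<^sub>R x)) = t\<^sup>2 * c\<^sup>2 / c^DIM('a) * L2sq_vec UNIV F"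
    and "hardy_integral p UNIV (\<lambda>x. t * f (c *\<^sub>R x))
       = ennreal (t\<^sup>2 * c powr p / c^DIM('a)) * hardy_integral p UNIV f"
proof -
  from W have [measurable]: "f \<in> borel_measurable borel"
    and i1: "integrable lborel (\<lambda>x. (f x)\<^sup>2)" and i2: "integrable lborel (\<lambda>x. (norm (F x))\<^sup>2)"
    by (auto simp: W12_UNIV_iff)
  show "L2sq UNIV (\<lambda>x. t * f (c *\<^sub>R x)) = t\<^sup>2 / c^DIM('a) * L2sq UNIV f"
    using integral_dilate(2)[OF i1 _ c]
    by (simp add: L2sq_def set_lebesgue_integral_def power_mult_distrib)
  show "L2sq_vec UNIV (\<lambda>x. (t * c) *\<^sub>R F (c *\<^sub>R x)) = t\<^sup>2 * c\<^sup>2 / c^DIM('a) * L2sq_vec UNIV F"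
    using integral_dilate(2)[OF i2 _ c]
    by (simp add: L2sq_vec_def set_lebesgue_integral_def power_mult_distrib)
  have "(t * f (c *\<^sub>R x))\<^sup>2 * norm x powr - p
      = t\<^sup>2 * c powr p * ((f (c *\<^sub>R x))\<^sup>2 * norm (c *\<^sub>R x) powr - p)" for x
    using powr_scale_norm[OF c, of x p] by (simp add: power_mult_distrib mult_ac)
  then show "hardy_integral p UNIV (\<lambda>x. t * f (c *\<^sub>R x))
       = ennreal (t\<^sup>2 * c powr p / c^DIM('a)) * hardy_integral p UNIV f"
    unfolding hardy_integral_def
    using nn_integral_dilate_cmult[of "\<lambda>x. (f x)\<^sup>2 * norm x powr - p" c "t\<^sup>2 * c powr p"] c
    by simp
qed

text \<open>The dilation of an element of W^{1,2}(R^d) is again in W^{1,2}(R^d), approximated by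
  the dilated test functions.\<close>
lemma W12_dilate:
  fixes f :: "'a::euclidean_space \<Rightarrow> real" and F :: "'a \<Rightarrow> 'a"
  assumes W: "(f, F) \<in> W12 UNIV" and c: "c > 0"
  shows "((\<lambda>x. t * f (c *\<^sub>R x)), (\<lambda>x. (t * c) *\<^sub>R F (c *\<^sub>R x))) \<in> W12 UNIV"
proof -
  from W have [measurable]: "f \<in> borel_measurable borel" "F \<in> borel_measurable borel"
    and i1: "integrable lborel (\<lambda>x. (f x)\<^sup>2)" and i2: "integrable lborel (\<lambda>x. (norm (F x))\<^sup>2)"
    by (auto simp: W12_UNIV_iff)
  from W obtain \<phi> where t: "\<And>k. test_fun UNIV (\<phi> k)"
    and c1: "(\<lambda>k. \<integral>\<^sup>+x. ennreal ((\<phi> k x - f x)\<^sup>2) \<partial>lborel) \<longlonglongrightarrow> 0"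
    and c2: "(\<lambda>k. \<integral>\<^sup>+x. ennreal ((norm (grad (\<phi> k) x - F x))\<^sup>2) \<partial>lborel) \<longlonglongrightarrow> 0"
    by (auto simp: W12_UNIV_iff)
  have sm: "smooth_fun (\<phi> k)" for k using t by (simp add: test_fun_def)
  have [measurable]: "\<phi> k \<in> borel_measurable borel" "grad (\<phi> k) \<in> borel_measurable borel" for k
    using smooth_fun_measurable[OF sm] smooth_fun_grad_measurable[OF sm] by simp_all
  define \<psi> where "\<psi> k = (\<lambda>x. t * \<phi> k (c *\<^sub>R x))" for k
  have "test_fun UNIV (\<psi> k)" for k
    using test_fun_rescale[OF t[of k], of c t] c by (auto simp: \<psi>_def test_fun_def)
  moreover have "(\<lambda>k. \<integral>\<^sup>+x. ennreal ((\<psi> k x - t * f (c *\<^sub>R x))\<^sup>2) \<partial>lborel) \<longlonglongrightarrow> 0"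
  proof -
    have "(\<integral>\<^sup>+x. ennreal ((\<psi> k x - t * f (c *\<^sub>R x))\<^sup>2) \<partial>lborel)
        = ennreal (t\<^sup>2 / c^DIM('a)) * (\<integral>\<^sup>+x. ennreal ((\<phi> k x - f x)\<^sup>2) \<partial>lborel)" for k
      using nn_integral_dilate_cmult[of "\<lambda>x. (\<phi> k x - f x)\<^sup>2" c "t\<^sup>2"] c
      by (simp add: \<psi>_def power_mult_distrib right_diff_distrib[symmetric])
    moreover have "(\<lambda>k. ennreal (t\<^sup>2 / c^DIM('a)) * (\<integral>\<^sup>+x. ennreal ((\<phi> k x - f x)\<^sup>2) \<partial>lborel))
        \<longlonglongrightarrow> ennreal (t\<^sup>2 / c^DIM('a)) * 0"
      by (intro ennreal_tendsto_cmult c1) simp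
    ultimately show ?thesis by simp
  qed
  moreover have "(\<lambda>k. \<integral>\<^sup>+x. ennreal ((norm (grad (\<psi> k) x - (t * c) *\<^sub>R F (c *\<^sub>R x)))\<^sup>2) \<partial>lborel)
      \<longlonglongrightarrow> 0"
  proof -
    have "grad (\<psi> k) x = (t * c) *\<^sub>R grad (\<phi> k) (c *\<^sub>R x)" for k x
      unfolding \<psi>_def by (rule grad_rescale) (use smooth_fun_differentiable[OF sm] in auto)
    then have "(\<integral>\<^sup>+x. ennreal ((norm (grad (\<psi> k) x - (t * c) *\<^sub>R F (c *\<^sub>R x)))\<^sup>2) \<partial>lborel)
        = ennreal ((t * c)\<^sup>2 / c^DIM('a)) * (\<integral>\<^sup>+x. ennreal ((norm (grad (\<phi> k) x - F x))\<^sup>2) \<partial>lborel)"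
      for k
      using nn_integral_dilate_cmult[of "\<lambda>x. (norm (grad (\<phi> k) x - F x))\<^sup>2" c "(t * c)\<^sup>2"] c
      by (simp add: power_mult_distrib scaleR_diff_right[symmetric])
    moreover have "(\<lambda>k. ennreal ((t * c)\<^sup>2 / c^DIM('a))
        * (\<integral>\<^sup>+x. ennreal ((norm (grad (\<phi> k) x - F x))\<^sup>2) \<partial>lborel))
        \<longlonglongrightarrow> ennreal ((t * c)\<^sup>2 / c^DIM('a)) * 0"
      by (intro ennreal_tendsto_cmult c2) simp
    ultimately show ?thesis by simp
  qed
  moreover have "integrable lborel (\<lambda>x. (t * f (c *\<^sub>R x))\<^sup>2)"
    using integrable_mult_right[OF integral_dilate(1)[OF i1 _ c], of "t\<^sup>2"]
    by (simp add: power_mult_distrib)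
  moreover have "integrable lborel (\<lambda>x. (norm ((t * c) *\<^sub>R F (c *\<^sub>R x)))\<^sup>2)"
    using integrable_mult_right[OF integral_dilate(1)[OF i2 _ c], of "(t * c)\<^sup>2"]
    by (simp add: power_mult_distrib)
  ultimately show ?thesis
    unfolding W12_UNIV_iff by (intro conjI exI[of _ \<psi>]) (auto simp del: power_mult_distrib)
qed

definition bump :: "'a::euclidean_space \<Rightarrow> real" where
  "bump x = flat 0 (1 - x \<bullet> x)"

text \<open>The bump belongs to the algebra generated by the flat functions, hence is smooth.\<close>
lemma bump_smooth: "smooth_fun bump"
proof -
  have "(\<lambda>x::'a. flat 0 ((\<lambda>x. 1) x + (\<lambda>x. -1) x * (x \<bullet> x))) \<in> flat_alg"
    by (intro flat_alg.intros)
  then show ?thesis by (simp add: bump_def[abs_def] flat_alg_smooth)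
qed

lemma bump_nonzero_iff: "bump x \<noteq> 0 \<longleftrightarrow> norm x < 1"
proof -
  have "x \<bullet> x = (norm x)^2" by (simp add: power2_norm_eq_inner)
  moreover have "(norm x)^2 < 1 \<longleftrightarrow> norm x < 1"
    by (simp add: power_less_one_iff abs_square_less_1)
  ultimately show ?thesis by (simp add: bump_def flat_def)
qed

lemma cball_subset_cube: "s < r \<Longrightarrow> cball 0 s \<subseteq> (cube r :: 'a::euclidean_space set)"
proof
  fix x :: 'a assume "s < r" "x \<in> cball 0 s"
  then have "- r < x \<bullet> i \<and> x \<bullet> i < r" if "i \<in> Basis" for i
    using Basis_le_norm[OF that, of x] unfolding abs_le_iff by auto
  then show "x \<in> cube r" unfolding cube_def mem_box by (auto simp: inner_simps)
qed

lemma scaled_bump_test_fun: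
  assumes s: "0 < s" "s < r"
  shows "test_fun (cube r) (\<lambda>x::'a::euclidean_space. a * bump ((1/s) *\<^sub>R x))"
proof -
  have "{x::'a. a * bump ((1/s) *\<^sub>R x) \<noteq> 0} \<subseteq> cball 0 s"
    using s by (auto simp: bump_nonzero_iff field_simps)
  then have supp: "closure {x::'a. a * bump ((1/s) *\<^sub>R x) \<noteq> 0} \<subseteq> cball 0 s"
    by (rule closure_minimal) simp
  show ?thesis
    unfolding test_fun_def
  proof (intro conjI)
    show "smooth_fun (\<lambda>x::'a. a * bump ((1/s) *\<^sub>R x))" by (rule smooth_fun_rescale[OF bump_smooth])
    show "compact (closure {x::'a. a * bump ((1/s) *\<^sub>R x) \<noteq> 0})"
      using bounded_subset[OF bounded_cball subset_trans[OF closure_subset supp]]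
      by (simp only: compact_closure)
    show "closure {x::'a. a * bump ((1/s) *\<^sub>R x) \<noteq> 0} \<subseteq> cube r"
      using supp cball_subset_cube[OF s(2)] by (rule subset_trans)
  qed
qed

lemma bump_test_fun: "test_fun UNIV (bump :: 'a::euclidean_space \<Rightarrow> real)"
  using scaled_bump_test_fun[of 1 2 1, where 'a='a] unfolding test_fun_def by simp

definition bump_L2 :: "'a::euclidean_space itself \<Rightarrow> real" where
  "bump_L2 _ = L2sq UNIV (bump :: 'a \<Rightarrow> real)"

definition bump_grad_L2 :: "'a::euclidean_space itself \<Rightarrow> real" where
  "bump_grad_L2 _ = L2sq_vec UNIV (grad (bump :: 'a \<Rightarrow> real))"

lemma bump_grad_L2_nonneg: "bump_grad_L2 TYPE('a::euclidean_space) \<ge> 0"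
  using W12_norms(4)[OF test_fun_in_W12[OF bump_test_fun]] by (simp add: bump_grad_L2_def)

text \<open>The bump is positive on the unit ball, which has positive measure.\<close>
lemma bump_L2_pos: "bump_L2 TYPE('a::euclidean_space) > 0"
proof -
  note W = test_fun_in_W12[OF bump_test_fun, where 'a='a]
  have [measurable]: "(bump :: 'a \<Rightarrow> real) \<in> borel_measurable borel"
    using smooth_fun_measurable[OF bump_smooth] by simp
  have "(\<integral>\<^sup>+x. ennreal ((bump (x::'a))\<^sup>2) \<partial>lborel) \<noteq> 0"
  proof
    assume "(\<integral>\<^sup>+x. ennreal ((bump (x::'a))\<^sup>2) \<partial>lborel) = 0"
    then have "AE x in lborel. ennreal ((bump (x::'a))\<^sup>2) = 0"
      by (subst (asm) nn_integral_0_iff_AE) auto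
    then have "AE x in lborel. (x::'a) \<notin> ball 0 1"
      by (rule AE_mp) (auto intro!: AE_I2 simp: bump_nonzero_iff[symmetric])
    then have "emeasure lborel (ball (0::'a) 1) = 0"
      by (subst (asm) AE_iff_measurable[of "ball 0 1"]) auto
    moreover have "measure lborel (ball (0::'a) 1) > 0"
      using content_ball_gt_0_iff[of "0::'a" 1] by simp
    ultimately show False by (simp add: measure_def)
  qed
  then have "ennreal (bump_L2 TYPE('a)) \<noteq> 0"
    using W12_norms(1)[OF W] by (simp add: bump_L2_def)
  then show ?thesis by (metis ennreal_eq_0_iff not_le)
qed

lemma scaled_bump_norms:
  fixes s r a :: real
  assumes s: "0 < s" "s < r"
  defines "g \<equiv> (\<lambda>x::'a::euclidean_space. a * bump ((1/s) *\<^sub>R x))"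
  shows "(g, grad g) \<in> W12 (cube r)"
    and "L2sq (cube r) g = a\<^sup>2 * s^DIM('a) * bump_L2 TYPE('a)"
    and "L2sq_vec (cube r) (grad g) = a\<^sup>2 * s^DIM('a) / s\<^sup>2 * bump_grad_L2 TYPE('a)"
proof -
  have t: "test_fun (cube r) g" unfolding g_def by (rule scaled_bump_test_fun[OF s])
  then show "(g, grad g) \<in> W12 (cube r)" by (rule test_fun_in_W12)
  have gg: "grad g = (\<lambda>x. (a * (1/s)) *\<^sub>R grad bump ((1/s) *\<^sub>R x))"
    unfolding g_def by (intro ext grad_rescale smooth_fun_differentiable[OF bump_smooth])
  note d = W12_dilate_norms[OF test_fun_in_W12[OF bump_test_fun], where 'a='a and c="1/s" and t=a]
  show "L2sq (cube r) g = a\<^sup>2 * s^DIM('a) * bump_L2 TYPE('a)"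
    unfolding test_fun_norms_UNIV[OF t]
    using d(1) s by (simp add: g_def bump_L2_def power_one_over)
  show "L2sq_vec (cube r) (grad g) = a\<^sup>2 * s^DIM('a) / s\<^sup>2 * bump_grad_L2 TYPE('a)"
    unfolding test_fun_norms_UNIV[OF t]
    using d(2) s by (simp add: gg bump_grad_L2_def power_one_over power_divide)
qed

text \<open>Lower bound for the L2 part of the constraint on Q_r: the normalised bump of radius r/2
  puts the fraction A / (A + B / (2 (r/2)^2)) of its energy into the L2 norm.\<close>
lemma cube_L2_sup_lower:
  assumes r: "0 < r"
  shows "ennreal (bump_L2 TYPE('a) / (bump_L2 TYPE('a) + bump_grad_L2 TYPE('a) / (2 * (r/2)\<^sup>2)))
     \<le> Sup ((\<lambda>(g, G). ennreal (L2sq (cube r) g)) ` Gset (cube r :: 'a::euclidean_space set))"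
proof -
  define s where "s = r/2"
  have s: "0 < s" "s < r" using r by (auto simp: s_def)
  define A where "A = bump_L2 TYPE('a)"
  define B where "B = bump_grad_L2 TYPE('a)"
  have A: "A > 0" and B: "B \<ge> 0"
    using bump_L2_pos bump_grad_L2_nonneg by (auto simp: A_def B_def)
  define K where "K = s^DIM('a) * (A + B / (2 * s\<^sup>2))"
  have K: "K > 0" using s A B by (auto simp: K_def intro!: mult_pos_pos add_pos_nonneg)
  define a where "a = sqrt (1 / K)"
  have a2: "a\<^sup>2 = 1 / K" using K by (simp add: a_def)
  define g where "g = (\<lambda>x::'a. a * bump ((1/s) *\<^sub>R x))"
  note norms = scaled_bump_norms[where 'a='a, OF s, of a, folded g_def A_def B_def]
  have "L2sq (cube r) g + 1/2 * L2sq_vec (cube r) (grad g) = a\<^sup>2 * K"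
    using norms(2,3) s by (simp add: K_def field_simps power2_eq_square)
  then have "(g, grad g) \<in> Gset (cube r)" using norms(1) a2 K by (simp add: Gset_def)
  then have "ennreal (L2sq (cube r) g)
      \<le> Sup ((\<lambda>(g, G). ennreal (L2sq (cube r) g)) ` Gset (cube r :: 'a set))"
    by (intro Sup_upper rev_image_eqI) auto
  moreover have "L2sq (cube r) g = A / (A + B / (2 * s\<^sup>2))"
    using norms(2) a2 s by (simp add: K_def)
  ultimately show ?thesis by (simp add: A_def B_def s_def)
qed

theorem cube_L2_sup_tendsto_1:
  "((\<lambda>r. Sup ((\<lambda>(g, G). ennreal (L2sq (cube r) g)) ` Gset (cube r :: 'a::euclidean_space set)))
     \<longlongrightarrow> 1) at_top"
proof (rule tendsto_sandwich[OF _ _ _ tendsto_const])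
  define A where "A = bump_L2 TYPE('a)"
  define B where "B = bump_grad_L2 TYPE('a)"
  have A: "A > 0" using bump_L2_pos by (simp add: A_def)
  show "\<forall>\<^sub>F r in at_top. ennreal (A / (A + B / (2 * (r/2)\<^sup>2)))
     \<le> Sup ((\<lambda>(g, G). ennreal (L2sq (cube r) g)) ` Gset (cube r :: 'a set))"
    using eventually_gt_at_top[of "0::real"]
    by eventually_elim (unfold A_def B_def, rule cube_L2_sup_lower)
  show "\<forall>\<^sub>F r in at_top. Sup ((\<lambda>(g, G). ennreal (L2sq (cube r) g)) ` Gset (cube r :: 'a set)) \<le> 1"
    by (intro always_eventually allI Sup_least) (auto intro!: ennreal_leI dest: Gset_L2sq_le_1)
  have "((\<lambda>r::real. B / (2 * (r/2)\<^sup>2)) \<longlongrightarrow> 0) at_top"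
    by (rule tendsto_divide_0[OF tendsto_const]) (rule filterlim_at_top_imp_at_infinity, real_asymp)
  then have "((\<lambda>r::real. A / (A + B / (2 * (r/2)\<^sup>2))) \<longlongrightarrow> A / (A + 0)) at_top"
    using A by (intro tendsto_intros) simp_all
  then show "((\<lambda>r. ennreal (A / (A + B / (2 * (r/2)\<^sup>2)))) \<longlongrightarrow> 1) at_top"
    using A by (metis ennreal_1 tendsto_ennrealI add_0_right divide_self_if less_irrefl)
qed

lemma W12_extend_by_zero:
  assumes W: "(g, G) \<in> W12 D" and D: "open D" and DE: "D \<subseteq> E"
  defines "g' \<equiv> (\<lambda>x. indicator D x * g x)" and "G' \<equiv> (\<lambda>x. indicator D x *\<^sub>R G x)"
  shows "(g', G') \<in> W12 E" "L2sq E g' = L2sq D g" "L2sq_vec E G' = L2sq_vec D G"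
    "hardy_integral p E g' = hardy_integral p D g"
proof -
  have [measurable]: "D \<in> sets borel" using D by simp
  from W have [measurable]: "g \<in> borel_measurable borel" "G \<in> borel_measurable borel"
    and i1: "set_integrable lborel D (\<lambda>x. (g x)\<^sup>2)"
    and i2: "set_integrable lborel D (\<lambda>x. (norm (G x))\<^sup>2)"
    by (auto simp: W12_def)
  from W obtain \<phi> where t: "\<And>k. test_fun D (\<phi> k)"
    and c1: "(\<lambda>k. \<integral>\<^sup>+x\<in>D. ennreal ((\<phi> k x - g x)\<^sup>2)\<partial>lborel) \<longlonglongrightarrow> 0"
    and c2: "(\<lambda>k. \<integral>\<^sup>+x\<in>D. ennreal ((norm (grad (\<phi> k) x - G x))\<^sup>2)\<partial>lborel) \<longlonglongrightarrow> 0"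
    by (auto simp: W12_def)
  have e1: "indicator E x *\<^sub>R (g' x)\<^sup>2 = indicator D x *\<^sub>R (g x)\<^sup>2"
    and e2: "indicator E x *\<^sub>R (norm (G' x))\<^sup>2 = indicator D x *\<^sub>R (norm (G x))\<^sup>2" for x
    using DE by (auto simp: g'_def G'_def indicator_def)
  have e3: "(\<integral>\<^sup>+x\<in>E. ennreal ((\<phi> k x - g' x)\<^sup>2)\<partial>lborel)
      = (\<integral>\<^sup>+x\<in>D. ennreal ((\<phi> k x - g x)\<^sup>2)\<partial>lborel)"
    and e4: "(\<integral>\<^sup>+x\<in>E. ennreal ((norm (grad (\<phi> k) x - G' x))\<^sup>2)\<partial>lborel)
      = (\<integral>\<^sup>+x\<in>D. ennreal ((norm (grad (\<phi> k) x - G x))\<^sup>2)\<partial>lborel)" for k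
    by (rule nn_integral_cong;
        use DE test_fun_vanishes_outside[OF t] in \<open>auto simp: g'_def G'_def indicator_def\<close>)+
  show "(g', G') \<in> W12 E"
    unfolding W12_def
  proof (clarify, intro conjI)
    show "g' \<in> borel_measurable lborel" "G' \<in> borel_measurable lborel"
      unfolding g'_def G'_def by measurable
    show "set_integrable lborel E (\<lambda>x. (g' x)\<^sup>2)" using i1 unfolding set_integrable_def e1 .
    show "set_integrable lborel E (\<lambda>x. (norm (G' x))\<^sup>2)" using i2 unfolding set_integrable_def e2 .
    show "\<exists>\<phi>. (\<forall>k. test_fun E (\<phi> k)) \<and>
         (\<lambda>k. \<integral>\<^sup>+x\<in>E. ennreal ((\<phi> k x - g' x)\<^sup>2)\<partial>lborel) \<longlonglongrightarrow> 0 \<and>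
         (\<lambda>k. \<integral>\<^sup>+x\<in>E. ennreal ((norm (grad (\<phi> k) x - G' x))\<^sup>2)\<partial>lborel) \<longlonglongrightarrow> 0"
      by (rule exI[of _ \<phi>]) (use t test_fun_mono DE c1 c2 e3 e4 in auto)
  qed
  show "L2sq E g' = L2sq D g" unfolding L2sq_def set_lebesgue_integral_def e1 ..
  show "L2sq_vec E G' = L2sq_vec D G" unfolding L2sq_vec_def set_lebesgue_integral_def e2 ..
  show "hardy_integral p E g' = hardy_integral p D g" unfolding hardy_integral_def
    by (rule nn_integral_cong) (use DE in \<open>auto simp: g'_def indicator_def\<close>)
qed

lemma hardy_sup_mono:
  assumes D: "open D" and DE: "D \<subseteq> E"
  shows "hardy_sup D p \<le> hardy_sup E p"
  unfolding hardy_sup_eq[of D]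
proof (rule Sup_least, clarify)
  fix g G assume "(g, G) \<in> Gset D"
  then have W: "(g, G) \<in> W12 D" and n: "L2sq D g + 1/2 * L2sq_vec D G = 1"
    by (auto simp: Gset_def)
  note e = W12_extend_by_zero[OF W D DE]
  have "((\<lambda>x. indicator D x * g x), (\<lambda>x. indicator D x *\<^sub>R G x)) \<in> Gset E"
    using e(1,2,3) n by (simp add: Gset_def)
  then show "hardy_integral p D g \<le> hardy_sup E p"
    using e(4) hardy_integral_le_hardy_sup by metis
qed

lemma cube_mono: "r \<le> r' \<Longrightarrow> cube r \<subseteq> cube r'"
  unfolding cube_def by (auto simp: mem_box inner_simps) (smt (verit))+

lemma open_cube: "open (cube r)"
  unfolding cube_def by (rule open_box)

lemma test_fun_in_some_cube: "test_fun UNIV f \<Longrightarrow> \<exists>r. test_fun (cube r) f"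
proof -
  assume t: "test_fun UNIV f"
  then have "bounded (closure {x. f x \<noteq> 0})" by (auto simp: test_fun_def compact_imp_bounded)
  then obtain b where "closure {x. f x \<noteq> 0} \<subseteq> cball 0 b"
    unfolding bounded_pos by (auto simp: subset_iff)
  then have "closure {x. f x \<noteq> 0} \<subseteq> cube (b+1)"
    using cball_subset_cube[of b "b+1"] by auto
  then show ?thesis using t by (auto simp: test_fun_def)
qed

definition energy :: "('a::euclidean_space \<Rightarrow> real) \<Rightarrow> ('a \<Rightarrow> 'a) \<Rightarrow> ennreal" where
  "energy g G = (\<integral>\<^sup>+x. ennreal ((g x)\<^sup>2) \<partial>lborel)
     + ennreal (1/2) * (\<integral>\<^sup>+x. ennreal ((norm (G x))\<^sup>2) \<partial>lborel)"

lemma energy_W12: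
  assumes "(g, G) \<in> W12 UNIV"
  shows "energy g G = ennreal (L2sq UNIV g + 1/2 * L2sq_vec UNIV G)"
proof -
  note n = W12_norms[OF assms]
  have "ennreal (1/2 * L2sq_vec UNIV G) = ennreal (1/2) * ennreal (L2sq_vec UNIV G)"
    by (rule ennreal_mult) (use n in auto)
  moreover have "ennreal (L2sq UNIV g + 1/2 * L2sq_vec UNIV G)
      = ennreal (L2sq UNIV g) + ennreal (1/2 * L2sq_vec UNIV G)"
    by (rule ennreal_plus) (use n in auto)
  ultimately show ?thesis using n(1,3) by (simp add: energy_def)
qed

lemma test_fun_hardy_integral_UNIV:
  "test_fun D f \<Longrightarrow> hardy_integral p D f = hardy_integral p UNIV f"
  unfolding hardy_integral_def
  by (rule nn_integral_cong) (auto simp: indicator_def dest: test_fun_vanishes_outside)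

text \<open>A test function on D, normalised to the constraint set, bounds its weighted integral by
  its energy times the Hardy supremum on D.\<close>
lemma test_fun_hardy_bound:
  fixes f :: "'a::euclidean_space \<Rightarrow> real"
  assumes t: "test_fun D f"
  shows "hardy_integral p UNIV f \<le> energy f (grad f) * hardy_sup D p"
proof -
  define N where "N = L2sq UNIV f + 1/2 * L2sq_vec UNIV (grad f)"
  have W: "(f, grad f) \<in> W12 UNIV" by (rule test_fun_in_W12[OF test_fun_mono[OF t subset_UNIV]])
  have E: "energy f (grad f) = ennreal N" unfolding N_def by (rule energy_W12[OF W])
  show ?thesis
  proof (cases "N > 0")
    case False
    then have "L2sq UNIV f = 0" using W12_norms(2,4)[OF W] by (simp add: N_def)
    then show ?thesis using hardy_integral_eq_0[OF W] by simp
  next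
    case True
    define c where "c = 1 / sqrt N"
    have c2: "c\<^sup>2 * N = 1" using True by (simp add: c_def power_divide)
    define h where "h = (\<lambda>x. c * f (1 *\<^sub>R x))"
    have th: "test_fun D h"
      using test_fun_rescale[OF t, of 1 c] by (simp add: h_def)
    have gh: "grad h = (\<lambda>x. (c * 1) *\<^sub>R grad f (1 *\<^sub>R x))"
      unfolding h_def
      by (intro ext grad_rescale smooth_fun_differentiable) (use t in \<open>simp add: test_fun_def\<close>)
    note d = W12_dilate_norms[OF W, where c=1 and t=c, folded h_def gh]
    have "(h, grad h) \<in> Gset D"
      using test_fun_in_W12[OF th] d(1,2) c2
      by (simp add: Gset_def test_fun_norms_UNIV[OF th] N_def algebra_simps)
    then have "ennreal (c\<^sup>2) * hardy_integral p UNIV f \<le> hardy_sup D p"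
      using hardy_integral_le_hardy_sup d(3) test_fun_hardy_integral_UNIV[OF th] by fastforce
    then have "ennreal N * (ennreal (c\<^sup>2) * hardy_integral p UNIV f) \<le> ennreal N * hardy_sup D p"
      by (rule mult_left_mono) simp
    moreover have "ennreal N * ennreal (c\<^sup>2) = 1"
      using c2 True by (simp add: ennreal_mult[symmetric] mult.commute)
    ultimately show ?thesis by (simp add: E mult.assoc[symmetric] mult.commute)
  qed
qed

lemma test_fun_hardy_le_SUP_cubes:
  fixes f :: "'a::euclidean_space \<Rightarrow> real"
  assumes t: "test_fun UNIV f"
  shows "hardy_integral p UNIV f \<le> energy f (grad f) * (SUP r. hardy_sup (cube r :: 'a set) p)"
proof -
  obtain r where r: "test_fun (cube r) f" using test_fun_in_some_cube[OF t] by blast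
  have "hardy_integral p UNIV f \<le> energy f (grad f) * hardy_sup (cube r :: 'a set) p"
    by (rule test_fun_hardy_bound[OF r])
  also have "\<dots> \<le> energy f (grad f) * (SUP r. hardy_sup (cube r :: 'a set) p)"
    by (intro mult_left_mono SUP_upper) auto
  finally show ?thesis .
qed

text \<open>Weighted triangle inequality |u|^2 \<le> (1+d) |v|^2 + (1+1/d) |u-v|^2, from 2ab \<le> d a^2 + b^2/d.\<close>
lemma norm_sq_split:
  fixes u v :: "'a::real_normed_vector" and d :: real
  assumes d: "d > 0"
  shows "(norm u)\<^sup>2 \<le> (1 + d) * (norm v)\<^sup>2 + (1 + 1/d) * (norm (u - v))\<^sup>2"
proof -
  define a b where "a = norm v" and "b = norm (u - v)"
  have "norm u \<le> a + b" unfolding a_def b_def by (metis add.commute diff_add_cancel norm_triangle_ineq)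
  then have "(norm u)\<^sup>2 \<le> (a + b)\<^sup>2" by (simp add: power_mono)
  also have "\<dots> = a\<^sup>2 + b\<^sup>2 + 2 * a * b" by (simp add: power2_eq_square algebra_simps)
  also have "2 * a * b \<le> d * a\<^sup>2 + b\<^sup>2 / d"
  proof -
    have "0 \<le> (d * a - b)\<^sup>2 / d" using d by simp
    also have "\<dots> = d * a\<^sup>2 + b\<^sup>2 / d - 2 * a * b" using d by (simp add: power2_eq_square field_simps)
    finally show ?thesis by simp
  qed
  finally show ?thesis unfolding a_def b_def by (simp add: algebra_simps)
qed

lemma nn_integral_split_bound:
  fixes F H E :: "'a::euclidean_space \<Rightarrow> real"
  assumes [measurable]: "F \<in> borel_measurable borel" "H \<in> borel_measurable borel"
    "E \<in> borel_measurable borel"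
    and le: "\<And>x. F x \<le> a * H x + b * E x"
    and nonneg: "\<And>x. H x \<ge> 0" "\<And>x. E x \<ge> 0" "a \<ge> 0" "b \<ge> 0"
  shows "(\<integral>\<^sup>+x. ennreal (F x) \<partial>lborel)
    \<le> ennreal a * (\<integral>\<^sup>+x. ennreal (H x) \<partial>lborel) + ennreal b * (\<integral>\<^sup>+x. ennreal (E x) \<partial>lborel)"
proof -
  have "(\<integral>\<^sup>+x. ennreal (F x) \<partial>lborel)
      \<le> (\<integral>\<^sup>+x. ennreal a * ennreal (H x) + ennreal b * ennreal (E x) \<partial>lborel)"
  proof (rule nn_integral_mono)
    fix x
    have "ennreal (F x) \<le> ennreal (a * H x + b * E x)" by (rule ennreal_leI[OF le])
    also have "\<dots> = ennreal a * ennreal (H x) + ennreal b * ennreal (E x)"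
      using nonneg by (simp add: ennreal_mult)
    finally show "ennreal (F x) \<le> ennreal a * ennreal (H x) + ennreal b * ennreal (E x)" .
  qed
  also have "\<dots> = ennreal a * (\<integral>\<^sup>+x. ennreal (H x) \<partial>lborel) + ennreal b * (\<integral>\<^sup>+x. ennreal (E x) \<partial>lborel)"
    by (simp add: nn_integral_add nn_integral_cmult)
  finally show ?thesis .
qed

lemma energy_split:
  fixes g \<phi> :: "'a::euclidean_space \<Rightarrow> real" and G \<Phi> :: "'a \<Rightarrow> 'a"
  assumes [measurable]: "g \<in> borel_measurable borel" "\<phi> \<in> borel_measurable borel"
    "G \<in> borel_measurable borel" "\<Phi> \<in> borel_measurable borel"
    and d: "d > 0"
  shows "energy \<phi> \<Phi>
    \<le> ennreal (1+d) * energy g G + ennreal (1+1/d) * energy (\<lambda>x. \<phi> x - g x) (\<lambda>x. \<Phi> x - G x)"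
proof -
  let ?I = "\<lambda>h. \<integral>\<^sup>+x. ennreal (h x) \<partial>lborel"
  have "?I (\<lambda>x. (\<phi> x)\<^sup>2) \<le> ennreal (1+d) * ?I (\<lambda>x. (g x)\<^sup>2)
      + ennreal (1+1/d) * ?I (\<lambda>x. (\<phi> x - g x)\<^sup>2)"
    using norm_sq_split[OF d, of "\<phi> _" "g _"] d by (intro nn_integral_split_bound) auto
  moreover have "?I (\<lambda>x. (norm (\<Phi> x))\<^sup>2) \<le> ennreal (1+d) * ?I (\<lambda>x. (norm (G x))\<^sup>2)
      + ennreal (1+1/d) * ?I (\<lambda>x. (norm (\<Phi> x - G x))\<^sup>2)"
    using norm_sq_split[OF d, of "\<Phi> _" "G _"] d by (intro nn_integral_split_bound) auto
  ultimately have "energy \<phi> \<Phi>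
      \<le> (ennreal (1+d) * ?I (\<lambda>x. (g x)\<^sup>2) + ennreal (1+1/d) * ?I (\<lambda>x. (\<phi> x - g x)\<^sup>2))
       + ennreal (1/2) * (ennreal (1+d) * ?I (\<lambda>x. (norm (G x))\<^sup>2)
          + ennreal (1+1/d) * ?I (\<lambda>x. (norm (\<Phi> x - G x))\<^sup>2))"
    unfolding energy_def by (intro add_mono mult_left_mono) auto
  also have "\<dots> = ennreal (1+d) * energy g G
      + ennreal (1+1/d) * energy (\<lambda>x. \<phi> x - g x) (\<lambda>x. \<Phi> x - G x)"
    unfolding energy_def by (simp add: algebra_simps)
  finally show ?thesis .
qed

text \<open>The weighted integral restricted to |x| \<ge> \<eta>, where the weight is bounded by \<eta>^{-p}.\<close>
definition truncated_hardy_integral :: "real \<Rightarrow> real \<Rightarrow> ('a::euclidean_space \<Rightarrow> real) \<Rightarrow> ennreal"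
  where "truncated_hardy_integral p \<eta> g
    = (\<integral>\<^sup>+x. ennreal ((g x)\<^sup>2 * norm x powr - p * indicator {x. \<eta> \<le> norm x} x) \<partial>lborel)"

lemma hardy_integral_SUP_truncated:
  fixes g :: "'a::euclidean_space \<Rightarrow> real"
  assumes [measurable]: "g \<in> borel_measurable borel"
  shows "hardy_integral p UNIV g = (SUP n. truncated_hardy_integral p (inverse (Suc n)) g)"
proof -
  define F where "F n x = ennreal ((g x)\<^sup>2 * norm x powr - p
    * indicator {x. inverse (real (Suc n)) \<le> norm x} x)" for n and x :: 'a
  have "incseq F"
  proof (intro incseq_SucI le_funI)
    fix n and x :: 'a
    have h: "inverse (real (Suc (Suc n))) \<le> inverse (real (Suc n))" by (simp add: field_simps)
    have "indicator {x. inverse (real (Suc n)) \<le> norm x} x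
        \<le> (indicator {x. inverse (real (Suc (Suc n))) \<le> norm x} x :: real)"
      using order_trans[OF h] by (auto simp: indicator_def)
    then show "F n x \<le> F (Suc n) x" unfolding F_def by (intro ennreal_leI mult_left_mono) auto
  qed
  moreover have F_SUP: "(SUP n. F n x) = ennreal ((g x)\<^sup>2 * norm x powr - p)" for x
  proof (cases "x = 0")
    case False
    then obtain n where n: "inverse (real (Suc n)) < norm x"
      using reals_Archimedean[of "norm x"] by auto
    show ?thesis
    proof (rule antisym)
      show "(SUP n. F n x) \<le> ennreal ((g x)\<^sup>2 * norm x powr - p)"
        by (rule SUP_least) (auto simp: F_def indicator_def intro!: ennreal_leI)
      show "ennreal ((g x)\<^sup>2 * norm x powr - p) \<le> (SUP n. F n x)"
        by (rule SUP_upper2[of n]) (use n in \<open>auto simp: F_def\<close>)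
    qed
  qed (simp add: F_def)
  moreover have [measurable]: "F n \<in> borel_measurable lborel" for n unfolding F_def by measurable
  ultimately have "(\<integral>\<^sup>+x. (SUP n. F n x) \<partial>lborel) = (SUP n. integral\<^sup>N lborel (F n))"
    by (intro nn_integral_monotone_convergence_SUP) auto
  then show ?thesis
    unfolding hardy_integral_def truncated_hardy_integral_def F_def[symmetric] F_SUP by simp
qed

text \<open>Away from the origin the weight is bounded, so the truncated weighted integral of g is
  controlled by that of an approximant \<phi> and the L2 distance between them.\<close>
lemma truncated_hardy_split:
  fixes g \<phi> :: "'a::euclidean_space \<Rightarrow> real"
  assumes [measurable]: "g \<in> borel_measurable borel" "\<phi> \<in> borel_measurable borel"
    and p: "p \<ge> 0" and d: "d > 0" and \<eta>: "\<eta> > 0"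
  shows "truncated_hardy_integral p \<eta> g \<le> ennreal (1+d) * hardy_integral p UNIV \<phi>
    + ennreal ((1+1/d) * \<eta> powr - p) * (\<integral>\<^sup>+x. ennreal ((\<phi> x - g x)\<^sup>2) \<partial>lborel)"
proof -
  have "(g x)\<^sup>2 * norm x powr - p * indicator {x. \<eta> \<le> norm x} x
      \<le> (1 + d) * ((\<phi> x)\<^sup>2 * norm x powr - p) + (1 + 1/d) * \<eta> powr - p * (\<phi> x - g x)\<^sup>2" for x :: 'a
  proof (cases "\<eta> \<le> norm x")
    case True
    have w: "norm x powr - p \<le> \<eta> powr - p" by (rule powr_mono2') (use p \<eta> True in auto)
    have "(g x)\<^sup>2 * norm x powr - p
        \<le> ((1 + d) * (\<phi> x)\<^sup>2 + (1 + 1/d) * (\<phi> x - g x)\<^sup>2) * norm x powr - p"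
      using norm_sq_split[OF d, of "g x" "\<phi> x"]
      by (intro mult_right_mono) (auto simp: power2_commute)
    also have "\<dots> \<le> (1 + d) * ((\<phi> x)\<^sup>2 * norm x powr - p) + (1 + 1/d) * (\<phi> x - g x)\<^sup>2 * \<eta> powr - p"
    proof -
      have "(1 + 1/d) * (\<phi> x - g x)\<^sup>2 * norm x powr - p \<le> (1 + 1/d) * (\<phi> x - g x)\<^sup>2 * \<eta> powr - p"
        using d w by (intro mult_left_mono) auto
      then show ?thesis by (simp add: algebra_simps)
    qed
    finally show ?thesis using True by (simp add: algebra_simps)
  qed (use d in \<open>auto intro!: add_nonneg_nonneg\<close>)
  then show ?thesis
    unfolding truncated_hardy_integral_def hardy_integral_def
    using d by (intro order_trans[OF nn_integral_split_bound]) auto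
qed

lemma ennreal_le_of_scaled_bounds:
  fixes x S :: ennreal
  assumes S: "S < top" and le: "\<And>d. d > 0 \<Longrightarrow> x \<le> S * ennreal ((1 + d)\<^sup>2)"
  shows "x \<le> S"
proof -
  have "(\<lambda>n. (1 + inverse (real (Suc n)))\<^sup>2) \<longlonglongrightarrow> (1 + 0)\<^sup>2"
    by (intro tendsto_intros LIMSEQ_inverse_real_of_nat)
  then have "(\<lambda>n. S * ennreal ((1 + inverse (real (Suc n)))\<^sup>2)) \<longlonglongrightarrow> S * ennreal 1"
    by (intro ennreal_tendsto_cmult S tendsto_ennrealI) simp
  then have "x \<le> S * ennreal 1"
    by (rule tendsto_lowerbound) (use le in \<open>auto intro: always_eventually\<close>)
  then show ?thesis by simp
qed

text \<open>Approximate g by test functions \<phi>_k: each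
  \<phi>_k lives in some cube, so its weighted integral is at most its energy times the cube
  supremum S; the energies tend to at most (1+d) by the weighted triangle inequality, and
  away from the origin the weighted integrals of \<phi>_k and g are close.\<close>
lemma hardy_integral_le_SUP_cubes:
  fixes g :: "'a::euclidean_space \<Rightarrow> real"
  assumes GS: "(g, G) \<in> Gset UNIV" and p: "p \<ge> 0"
  shows "hardy_integral p UNIV g \<le> (SUP r. hardy_sup (cube r :: 'a set) p)"
proof (cases "(SUP r. hardy_sup (cube r :: 'a set) p) < top")
  case True
  define S where "S = (SUP r. hardy_sup (cube r :: 'a set) p)"
  have S: "S < top" using True by (simp add: S_def)
  from GS have W: "(g, G) \<in> W12 UNIV" and "L2sq UNIV g + 1/2 * L2sq_vec UNIV G = 1"
    by (auto simp: Gset_def)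
  then have E: "energy g G = 1" by (simp add: energy_W12)
  from W have [measurable]: "g \<in> borel_measurable borel" "G \<in> borel_measurable borel"
    by (auto simp: W12_UNIV_iff)
  from W obtain \<phi> where t: "\<And>k. test_fun UNIV (\<phi> k)"
    and c1: "(\<lambda>k. \<integral>\<^sup>+x. ennreal ((\<phi> k x - g x)\<^sup>2) \<partial>lborel) \<longlonglongrightarrow> 0"
    and c2: "(\<lambda>k. \<integral>\<^sup>+x. ennreal ((norm (grad (\<phi> k) x - G x))\<^sup>2) \<partial>lborel) \<longlonglongrightarrow> 0"
    by (auto simp: W12_UNIV_iff)
  have sm: "smooth_fun (\<phi> k)" for k using t by (simp add: test_fun_def)
  have [measurable]: "\<phi> k \<in> borel_measurable borel" "grad (\<phi> k) \<in> borel_measurable borel" for k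
    using smooth_fun_measurable[OF sm] smooth_fun_grad_measurable[OF sm] by simp_all
  define \<epsilon> where "\<epsilon> k = energy (\<lambda>x. \<phi> k x - g x) (\<lambda>x. grad (\<phi> k) x - G x)" for k
  have "\<epsilon> \<longlonglongrightarrow> 0 + ennreal (1/2) * 0"
    unfolding \<epsilon>_def energy_def by (intro tendsto_add ennreal_tendsto_cmult c1 c2 ennreal_less_top)
  then have \<epsilon>: "\<epsilon> \<longlonglongrightarrow> 0" by simp
  have "truncated_hardy_integral p \<eta> g \<le> S" if \<eta>: "\<eta> > 0" for \<eta>
  proof (rule ennreal_le_of_scaled_bounds[OF S])
    fix d :: real assume d: "d > 0"
    define C where "C = ennreal ((1+1/d) * \<eta> powr - p)"
    have bound: "truncated_hardy_integral p \<eta> g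
        \<le> ennreal (1+d) * (S * (ennreal (1+d) + ennreal (1+1/d) * \<epsilon> k)) + C * \<epsilon> k" for k
    proof -
      have "hardy_integral p UNIV (\<phi> k) \<le> energy (\<phi> k) (grad (\<phi> k)) * S"
        unfolding S_def by (rule test_fun_hardy_le_SUP_cubes[OF t])
      also have "\<dots> \<le> (ennreal (1+d) + ennreal (1+1/d) * \<epsilon> k) * S"
        using energy_split[of g "\<phi> k" G "grad (\<phi> k)", OF _ _ _ _ d]
        by (intro mult_right_mono) (simp_all add: E \<epsilon>_def)
      finally have \<phi>k: "hardy_integral p UNIV (\<phi> k) \<le> S * (ennreal (1+d) + ennreal (1+1/d) * \<epsilon> k)"
        by (simp add: mult.commute)
      have L2: "(\<integral>\<^sup>+x. ennreal ((\<phi> k x - g x)\<^sup>2) \<partial>lborel) \<le> \<epsilon> k"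
        by (simp add: \<epsilon>_def energy_def)
      have "truncated_hardy_integral p \<eta> g
          \<le> ennreal (1+d) * hardy_integral p UNIV (\<phi> k) + C * (\<integral>\<^sup>+x. ennreal ((\<phi> k x - g x)\<^sup>2) \<partial>lborel)"
        unfolding C_def by (rule truncated_hardy_split[OF _ _ p d \<eta>]) measurable
      also have "\<dots> \<le> ennreal (1+d) * (S * (ennreal (1+d) + ennreal (1+1/d) * \<epsilon> k)) + C * \<epsilon> k"
        using \<phi>k L2 by (intro add_mono mult_left_mono) simp_all
      finally show ?thesis .
    qed
    have "(\<lambda>k. ennreal (1+d) * (S * (ennreal (1+d) + ennreal (1+1/d) * \<epsilon> k)) + C * \<epsilon> k)
        \<longlonglongrightarrow> ennreal (1+d) * (S * (ennreal (1+d) + ennreal (1+1/d) * 0)) + C * 0"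
      unfolding C_def
      by (intro tendsto_add ennreal_tendsto_cmult tendsto_const \<epsilon> S ennreal_less_top)
    then have "truncated_hardy_integral p \<eta> g
        \<le> ennreal (1+d) * (S * (ennreal (1+d) + ennreal (1+1/d) * 0)) + C * 0"
      by (rule tendsto_lowerbound) (use bound in \<open>auto intro: always_eventually\<close>)
    also have "\<dots> = S * ennreal ((1 + d)\<^sup>2)"
      using d by (simp add: power2_eq_square ennreal_mult mult_ac)
    finally show "truncated_hardy_integral p \<eta> g \<le> S * ennreal ((1 + d)\<^sup>2)" .
  qed
  moreover have "hardy_integral p UNIV g = (SUP n. truncated_hardy_integral p (inverse (Suc n)) g)"
    by (rule hardy_integral_SUP_truncated) measurable
  ultimately show ?thesis unfolding S_def[symmetric] by (simp add: SUP_least)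
qed (metis less_top top_greatest)

text \<open>They increase with r, are bounded by rho, and by the
  approximation step their supremum is at least rho.\<close>
theorem hardy_sup_cubes_tendsto_rho:
  assumes p: "p \<ge> 0"
  shows "((\<lambda>r. hardy_sup (cube r :: 'a::euclidean_space set) p) \<longlongrightarrow> rho TYPE('a) p) at_top"
proof -
  define f where "f r = hardy_sup (cube r :: 'a set) p" for r
  have R: "rho TYPE('a) p = hardy_sup (UNIV :: 'a set) p" by (simp add: rho_def)
  have le: "f r \<le> rho TYPE('a) p" for r
    unfolding f_def R by (rule hardy_sup_mono[OF open_cube]) simp
  have mono: "r \<le> r' \<Longrightarrow> f r \<le> f r'" for r r'
    unfolding f_def by (rule hardy_sup_mono[OF open_cube cube_mono])
  have ge: "rho TYPE('a) p \<le> (SUP r. f r)"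
    unfolding R hardy_sup_eq[of "UNIV :: 'a set"] f_def
    by (rule Sup_least) (auto intro: hardy_integral_le_SUP_cubes[OF _ p])
  show ?thesis unfolding f_def[symmetric]
  proof (rule order_tendstoI)
    fix a assume "a < rho TYPE('a) p"
    then have "a < (SUP r. f r)" using ge by (rule less_le_trans)
    then obtain r0 where r0: "a < f r0" by (auto simp: less_SUP_iff)
    show "\<forall>\<^sub>F r in at_top. a < f r"
      using eventually_ge_at_top[of r0] by eventually_elim (use mono r0 in \<open>auto intro: less_le_trans\<close>)
  next
    fix a assume "rho TYPE('a) p < a"
    then show "\<forall>\<^sub>F r in at_top. f r < a" using le by (auto intro: le_less_trans always_eventually)
  qed
qed

text \<open>The constant relating rho and sigma: ((2-p)/2)^{(2-p)/2} p^{p/2}, i.e. with q = p/2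
  it is (1-q)^{1-q} (2q)^q, the maximum of a^{1-q} b^q under the constraint a + b/2 = 1.\<close>
definition interp_const :: "real \<Rightarrow> real" where
  "interp_const p = ((2 - p) / 2) powr ((2 - p) / 2) * p powr (p / 2)"

lemma interp_const_pos: "0 < p \<Longrightarrow> p < 2 \<Longrightarrow> interp_const p > 0"
  by (simp add: interp_const_def)

lemma interp_const_q: "interp_const p = (1 - p/2) powr (1 - p/2) * (2 * (p/2)) powr (p/2)"
  by (simp add: interp_const_def diff_divide_distrib)

lemma sqrt_powr: "(a::real) \<ge> 0 \<Longrightarrow> sqrt a powr e = a powr (e / 2)"
  by (simp add: powr_half_sqrt[symmetric] powr_powr)

text \<open>Weighted AM-GM (Young's inequality): on the constraint a + b/2 = 1 the product
  |f|^{2-p} |grad f|^p is at most the interpolation constant.\<close>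
lemma constraint_interp_bound:
  fixes a b p :: real
  assumes p: "0 < p" "p < 2" and ab: "a \<ge> 0" "b \<ge> 0" "a + 1/2 * b = 1"
  shows "sqrt a powr (2 - p) * sqrt b powr p \<le> interp_const p"
proof -
  define q where "q = p / 2"
  have q: "0 < q" "q < 1" using p by (auto simp: q_def)
  have L: "sqrt a powr (2 - p) * sqrt b powr p = a powr (1 - q) * b powr q"
    using ab by (simp add: sqrt_powr q_def diff_divide_distrib)
  have C: "interp_const p = (1 - q) powr (1 - q) * (2 * q) powr q"
    by (simp add: interp_const_q q_def)
  show ?thesis
  proof (cases "a = 0 \<or> b = 0")
    case True
    then show ?thesis unfolding L using q interp_const_pos[OF p] by auto
  next
    case False
    then have a: "a > 0" and b: "b > 0" using ab by auto
    have "(a / (1 - q)) powr (1 - q) * (b / (2 * q)) powr q \<le> (1 - q) * (a / (1 - q)) + q * (b / (2 * q))"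
      by (rule Youngs_inequality_0) (use q a b in auto)
    also have "\<dots> = 1" using q ab(3) by simp
    finally have "(a powr (1 - q) * b powr q) / ((1 - q) powr (1 - q) * (2 * q) powr q) \<le> 1"
      using q a b by (simp add: powr_divide)
    moreover have "(1 - q) powr (1 - q) * (2 * q) powr q > 0" using q by simp
    ultimately show ?thesis unfolding L C using q by (simp add: divide_le_eq_1)
  qed
qed

definition interp_admissible :: "'a::euclidean_space itself \<Rightarrow> real \<Rightarrow> ennreal set" where
  "interp_admissible _ p = {C. \<forall>(f, F) \<in> W12 (UNIV :: 'a set).
       hardy_integral p UNIV f \<le> C * ennreal (sqrt (L2sq UNIV f) powr (2 - p) * sqrt (L2sq_vec UNIV F) powr p)}"

lemma sigma_eq_Inf: "sigma TYPE('a::euclidean_space) p = Inf (interp_admissible TYPE('a) p)"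
  by (simp add: sigma_def interp_admissible_def hardy_integral_def)

lemma rho_eq_Sup:
  "rho TYPE('a::euclidean_space) p = Sup ((\<lambda>(g, G). hardy_integral p UNIV g) ` Gset (UNIV :: 'a set))"
  by (simp add: rho_def hardy_sup_eq)

lemma ennreal_mult_divide_cancel: "0 < c \<Longrightarrow> c < top \<Longrightarrow> c * (x / c) = (x :: ennreal)"
  by (metis ennreal_times_divide mult.commute mult_divide_eq_ennreal not_less_zero top.not_eq_extremum)

lemma ennreal_le_mult_Inf:
  fixes x c :: ennreal
  assumes c: "0 < c" "c < top" and le: "\<And>C. C \<in> A \<Longrightarrow> x \<le> C * c"
  shows "x \<le> c * Inf A"
proof -
  have "x / c \<le> Inf A"
    using le c by (intro Inf_greatest divide_le_posI_ennreal) (auto simp: mult.commute)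
  then have "c * (x / c) \<le> c * Inf A" by (rule mult_left_mono) simp
  then show ?thesis using ennreal_mult_divide_cancel[OF c] by simp
qed

text \<open>Upper bound rho \<le> c sigma: apply each admissible constant to the constraint set and use
  the AM-GM bound.\<close>
lemma rho_le_interp_sigma:
  assumes p: "0 < p" "p < 2"
  shows "rho TYPE('a::euclidean_space) p \<le> ennreal (interp_const p) * sigma TYPE('a) p"
  unfolding sigma_eq_Inf
proof (rule ennreal_le_mult_Inf)
  show "0 < ennreal (interp_const p)" "ennreal (interp_const p) < top"
    using interp_const_pos[OF p] by simp_all
  fix C assume C: "C \<in> interp_admissible TYPE('a) p"
  show "rho TYPE('a) p \<le> C * ennreal (interp_const p)"
    unfolding rho_eq_Sup
  proof (rule Sup_least, clarify)
    fix g :: "'a \<Rightarrow> real" and G assume "(g, G) \<in> Gset UNIV"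
    then have W: "(g, G) \<in> W12 UNIV" and n: "L2sq UNIV g + 1/2 * L2sq_vec UNIV G = 1"
      by (auto simp: Gset_def)
    have "hardy_integral p UNIV g
        \<le> C * ennreal (sqrt (L2sq UNIV g) powr (2 - p) * sqrt (L2sq_vec UNIV G) powr p)"
      using C W by (auto simp: interp_admissible_def)
    also have "\<dots> \<le> C * ennreal (interp_const p)"
      by (intro mult_left_mono ennreal_leI constraint_interp_bound[OF p] W12_norms[OF W] n) simp
    finally show "hardy_integral p UNIV g \<le> C * ennreal (interp_const p)" .
  qed
qed

text \<open>Dilating f by l and normalising so that its L2 part equals \<alpha> lands in the constraint set
  exactly when \<alpha> (1 + l^2 |grad f|^2 / (2 |f|^2)) = 1; then rho bounds the weighted integral
  of f by |f|^2 / (\<alpha> l^p) times rho.\<close>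
lemma hardy_integral_le_rho_dilation:
  fixes f :: "'a::euclidean_space \<Rightarrow> real"
  assumes W: "(f, F) \<in> W12 UNIV" and a: "L2sq UNIV f > 0" and l: "l > 0" and \<alpha>: "\<alpha> > 0"
    and constraint: "\<alpha> + \<alpha> * l\<^sup>2 * L2sq_vec UNIV F / (2 * L2sq UNIV f) = 1"
  shows "hardy_integral p UNIV f \<le> ennreal (L2sq UNIV f / (\<alpha> * l powr p)) * rho TYPE('a) p"
proof -
  define a where "a = L2sq UNIV f"
  define t where "t = sqrt (\<alpha> * l^DIM('a) / a)"
  have t2: "t\<^sup>2 = \<alpha> * l^DIM('a) / a" using a l \<alpha> by (simp add: t_def a_def)
  note d = W12_dilate_norms[OF W l, where t=t]
  have "L2sq UNIV (\<lambda>x. t * f (l *\<^sub>R x)) = \<alpha>"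
    using d(1) t2 a l by (simp add: a_def)
  moreover have "L2sq_vec UNIV (\<lambda>x. (t * l) *\<^sub>R F (l *\<^sub>R x)) = \<alpha> * l\<^sup>2 * L2sq_vec UNIV F / a"
    using d(2) t2 l by simp
  ultimately have "L2sq UNIV (\<lambda>x. t * f (l *\<^sub>R x))
      + 1/2 * L2sq_vec UNIV (\<lambda>x. (t * l) *\<^sub>R F (l *\<^sub>R x)) = 1"
    using constraint by (simp add: a_def)
  then have "((\<lambda>x. t * f (l *\<^sub>R x)), (\<lambda>x. (t * l) *\<^sub>R F (l *\<^sub>R x))) \<in> Gset UNIV"
    using W12_dilate[OF W l] by (simp add: Gset_def)
  then have "ennreal (t\<^sup>2 * l powr p / l^DIM('a)) * hardy_integral p UNIV f \<le> rho TYPE('a) p"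
    using hardy_integral_le_hardy_sup d(3) by (fastforce simp: rho_def)
  moreover have "t\<^sup>2 * l powr p / l^DIM('a) = \<alpha> * l powr p / a" using t2 l by simp
  ultimately have K: "ennreal (\<alpha> * l powr p / a) * hardy_integral p UNIV f \<le> rho TYPE('a) p"
    by simp
  have "ennreal (a / (\<alpha> * l powr p)) * ennreal (\<alpha> * l powr p / a) = 1"
    using a l \<alpha> by (simp add: a_def ennreal_mult[symmetric])
  then have "hardy_integral p UNIV f
      = ennreal (a / (\<alpha> * l powr p)) * (ennreal (\<alpha> * l powr p / a) * hardy_integral p UNIV f)"
    by (simp add: mult.assoc[symmetric])
  also have "\<dots> \<le> ennreal (a / (\<alpha> * l powr p)) * rho TYPE('a) p"
    by (rule mult_left_mono[OF K]) simp
  finally show ?thesis by (simp add: a_def)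
qed

text \<open>Degenerate case |grad f| = 0: dilating by l \<rightarrow> \<infinity> shows that the weighted integral
  vanishes (if rho is finite).\<close>
lemma hardy_integral_eq_0_no_gradient:
  fixes f :: "'a::euclidean_space \<Rightarrow> real"
  assumes W: "(f, F) \<in> W12 UNIV" and a: "L2sq UNIV f > 0" and b: "L2sq_vec UNIV F = 0"
    and p: "p > 0" and fin: "rho TYPE('a) p < top"
  shows "hardy_integral p UNIV f = 0"
proof -
  have bound: "hardy_integral p UNIV f \<le> ennreal (L2sq UNIV f / l powr p) * rho TYPE('a) p"
    if l: "l > 0" for l
    using hardy_integral_le_rho_dilation[OF W a l, of 1 p] b by simp
  have "((\<lambda>l. L2sq UNIV f / l powr p) \<longlongrightarrow> L2sq UNIV f * 0) at_top"
    unfolding divide_inverse powr_minus[symmetric]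
    by (intro tendsto_mult tendsto_const tendsto_neg_powr filterlim_ident) (use p in auto)
  then have "((\<lambda>l. ennreal (L2sq UNIV f / l powr p)) \<longlongrightarrow> ennreal 0) at_top"
    by (intro tendsto_ennrealI) simp
  then have "((\<lambda>l. rho TYPE('a) p * ennreal (L2sq UNIV f / l powr p)) \<longlongrightarrow> rho TYPE('a) p * ennreal 0) at_top"
    by (rule ennreal_tendsto_cmult[OF fin])
  then have "hardy_integral p UNIV f \<le> rho TYPE('a) p * ennreal 0"
    by (rule tendsto_lowerbound)
       (use bound in \<open>auto simp: mult.commute intro: eventually_mono[OF eventually_gt_at_top[of "0::real"]]\<close>)
  then show ?thesis by simp
qed

text \<open>With q = p/2 and the optimal dilation l^2 = (2q/(1-q)) a/b, the bound of the dilation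
  lemma equals a^{1-q} b^q / c, i.e. the interpolation product divided by the constant.\<close>
lemma optimal_dilation_identity:
  fixes a b p :: real
  assumes p: "0 < p" "p < 2" and a: "a > 0" and b: "b > 0"
  defines "q \<equiv> p / 2"
  defines "l \<equiv> sqrt (2 * q / (1 - q) * a / b)"
  shows "a / ((1 - q) * l powr p) = (a powr (1 - q) * b powr q) / interp_const p"
proof -
  have q: "0 < q" "q < 1" using p by (auto simp: q_def)
  have "l powr p = (2 * q / (1 - q) * a / b) powr q"
    unfolding l_def using q a b by (subst sqrt_powr) (auto simp: q_def)
  also have "\<dots> = (2 * q) powr q / (1 - q) powr q * a powr q / b powr q"
    using q a b by (simp add: powr_mult powr_divide)
  finally have "(1 - q) * l powr p
      = ((1 - q) / (1 - q) powr q) * (2 * q) powr q * a powr q / b powr q" by simp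
  also have "(1 - q) / (1 - q) powr q = (1 - q) powr (1 - q)"
    using q by (simp add: powr_diff)
  finally have lp: "(1 - q) * l powr p = (1 - q) powr (1 - q) * (2 * q) powr q * a powr q / b powr q" .
  have "a powr (1 - q) = a / a powr q" using a by (simp add: powr_diff)
  moreover have "(1 - q) powr q > 0" "a powr q > 0" "b powr q > 0" "(2 * q) powr q > 0"
    "(1 - q) powr (1 - q) > 0"
    using q a b by auto
  ultimately show ?thesis
    unfolding interp_const_q lp q_def[symmetric] by (simp add: field_simps)
qed

text \<open>Lower bound: if rho is finite, rho / c is an admissible constant in the interpolation
  inequality.  Each f is dilated optimally onto the constraint set.\<close>
lemma rho_div_interp_admissible:
  assumes p: "0 < p" "p < 2" and fin: "rho TYPE('a::euclidean_space) p < top"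
  shows "rho TYPE('a) p / ennreal (interp_const p) \<in> interp_admissible TYPE('a) p"
  unfolding interp_admissible_def
proof (clarify)
  fix f :: "'a \<Rightarrow> real" and F assume W: "(f, F) \<in> W12 UNIV"
  define a b where "a = L2sq UNIV f" and "b = L2sq_vec UNIV F"
  define c where "c = interp_const p"
  have c: "c > 0" using interp_const_pos[OF p] by (simp add: c_def)
  have "a \<ge> 0" "b \<ge> 0" using W12_norms[OF W] by (simp_all add: a_def b_def)
  then consider "a = 0" | "a > 0" "b = 0" | "a > 0" "b > 0" by fastforce
  then show "hardy_integral p UNIV f
      \<le> rho TYPE('a) p / ennreal (interp_const p)
        * ennreal (sqrt (L2sq UNIV f) powr (2 - p) * sqrt (L2sq_vec UNIV F) powr p)"
  proof cases
    case 1
    then show ?thesis using hardy_integral_eq_0[OF W] by (simp add: a_def)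
  next
    case 2
    then show ?thesis using hardy_integral_eq_0_no_gradient[OF W _ _ _ fin] p by (simp add: a_def b_def)
  next
    case 3
    define q where "q = p / 2"
    have q: "0 < q" "q < 1" using p by (auto simp: q_def)
    define l where "l = sqrt (2 * q / (1 - q) * a / b)"
    have l: "l > 0" "l\<^sup>2 = 2 * q / (1 - q) * a / b" using q 3 by (simp_all add: l_def)
    have "hardy_integral p UNIV f \<le> ennreal (a / ((1 - q) * l powr p)) * rho TYPE('a) p"
      unfolding a_def
      by (rule hardy_integral_le_rho_dilation[OF W _ l(1)])
         (use 3 q l(2) in \<open>simp_all add: a_def b_def\<close>)
    also have "a / ((1 - q) * l powr p) = (sqrt a powr (2 - p) * sqrt b powr p) / c"
      using optimal_dilation_identity[OF p 3] 3
      by (simp add: l_def q_def c_def sqrt_powr diff_divide_distrib)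
    also have "ennreal (sqrt a powr (2 - p) * sqrt b powr p / c) * rho TYPE('a) p
        = rho TYPE('a) p / ennreal c * ennreal (sqrt a powr (2 - p) * sqrt b powr p)"
      using c by (simp add: divide_ennreal[symmetric] ennreal_times_divide ennreal_divide_times mult.commute)
    finally show ?thesis by (simp add: a_def b_def c_def)
  qed
qed

theorem rho_eq_interp_sigma:
  assumes p: "0 < p" "p < 2"
  shows "rho TYPE('a::euclidean_space) p = ennreal (interp_const p) * sigma TYPE('a) p"
proof (rule antisym)
  show "rho TYPE('a) p \<le> ennreal (interp_const p) * sigma TYPE('a) p"
    by (rule rho_le_interp_sigma[OF p])
  show "ennreal (interp_const p) * sigma TYPE('a) p \<le> rho TYPE('a) p"
  proof (cases "rho TYPE('a) p < top")
    case True
    have "sigma TYPE('a) p \<le> rho TYPE('a) p / ennreal (interp_const p)"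
      unfolding sigma_eq_Inf by (rule Inf_lower[OF rho_div_interp_admissible[OF p True]])
    then have "ennreal (interp_const p) * sigma TYPE('a) p
        \<le> ennreal (interp_const p) * (rho TYPE('a) p / ennreal (interp_const p))"
      by (rule mult_left_mono) simp
    then show ?thesis
      using ennreal_mult_divide_cancel interp_const_pos[OF p] by simp
  qed (metis less_top top_greatest)
qed

theorem mainTheorem13:
  fixes p :: real
  shows "((\<lambda>r. Sup ((\<lambda>(g, G). ennreal (L2sq (cube r) g)) ` Gset (cube r :: 'a::euclidean_space set)))
            \<longlongrightarrow> 1) at_top
    \<and> (real DIM('a) / 2 < p \<and> p < min 2 (real DIM('a)) \<longrightarrow>
         ((\<lambda>r. hardy_sup (cube r :: 'a set) p) \<longlongrightarrow> rho TYPE('a) p) at_top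
       \<and> rho TYPE('a) p = ennreal (((2 - p) / 2) powr ((2 - p) / 2) * p powr (p / 2)) * sigma TYPE('a) p)"
proof (intro conjI impI)
  show "((\<lambda>r. Sup ((\<lambda>(g, G). ennreal (L2sq (cube r) g)) ` Gset (cube r :: 'a set))) \<longlongrightarrow> 1) at_top"
    by (rule cube_L2_sup_tendsto_1)
  assume "real DIM('a) / 2 < p \<and> p < min 2 (real DIM('a))"
  then have p: "0 < p" "p < 2" by auto
  show "((\<lambda>r. hardy_sup (cube r :: 'a set) p) \<longlongrightarrow> rho TYPE('a) p) at_top"
    using hardy_sup_cubes_tendsto_rho[of p] p by simp
  show "rho TYPE('a) p = ennreal (((2 - p) / 2) powr ((2 - p) / 2) * p powr (p / 2)) * sigma TYPE('a) p"
    using rho_eq_interp_sigma[OF p] by (simp add: interp_const_def)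
qed

end
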